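(* Let $\mu$ be a continuous probability distribution supported on a compact set $\mathcal{X}\subset\mathbb{R}^2$ of Euclidean diameter at most $1$, and let $\mu_n$ be an empirical distribution of $\mu$ on $n$ samples. Then $\mathrm{RPW}_{2,1}(\mu,\mu_n)=\tilde O(n^{-1/3})$ with high probability.
   Context: The metric is the Euclidean distance $c$. For $p\in[1,\infty)$ and $\alpha\in[0,1]$, a partial transport plan of mass $\alpha$ between probability distributions $\mu,\nu$ is a nonnegative measure $\gamma$ on $\mathcal{X}\times\mathcal{X}$ of total mass $\alpha$ with first marginal $\le\mu$ and second marginal $\le\nu$ (setwise); its cost is $w_p(\gamma)=(\int c^p\,d\gamma)^{1/p}$, and $W_{p,\alpha}(\mu,\nu)$ is the infimum of $w_p(\gamma)$ over such $\gamma$. For $k\ge0$, $\mathrm{RPW}_{p,k}(\mu,\nu)=\inf\{\varepsilon\in[0,1]: W_{p,1-\varepsilon}(\mu,\nu)\le k\varepsilon\}$. An empirical distribution $\mu_n$ is $\frac1n\sum_{i=1}^n\delta_{x_i}$ with $x_1,\dots,x_n$ i.i.d. from $\mu$. $\tilde O(\cdot)$ hides polylogarithmic factors in $n$; "with high probability" means with probability at least $1-n^{-c}$ for some constant $c>0$. *)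

theory Defs
  imports "HOL-Probability.Probability"
begin

definition partial_plans :: "real \<Rightarrow> 'a::euclidean_space measure \<Rightarrow> 'a measure \<Rightarrow> ('a \<times> 'a) measure set" where
  "partial_plans \<alpha> \<mu> \<nu> = {\<gamma>. sets \<gamma> = sets borel \<and> emeasure \<gamma> (space \<gamma>) = ennreal \<alpha> \<and>
      (\<forall>A \<in> sets borel. emeasure \<gamma> (A \<times> UNIV) \<le> emeasure \<mu> A) \<and>
      (\<forall>B \<in> sets borel. emeasure \<gamma> (UNIV \<times> B) \<le> emeasure \<nu> B)}"

definition wcost :: "real \<Rightarrow> ('a::euclidean_space \<times> 'a) measure \<Rightarrow> ennreal" where
  "wcost p \<gamma> = (let I = (\<integral>\<^sup>+ z. ennreal (dist (fst z) (snd z) powr p) \<partial>\<gamma>)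
                 in if I = \<infinity> then \<infinity> else ennreal ((enn2real I) powr (1 / p)))"

definition partial_W :: "real \<Rightarrow> real \<Rightarrow> 'a::euclidean_space measure \<Rightarrow> 'a measure \<Rightarrow> ennreal" where
  "partial_W p \<alpha> \<mu> \<nu> = (INF \<gamma> \<in> partial_plans \<alpha> \<mu> \<nu>. wcost p \<gamma>)"

definition RPW :: "real \<Rightarrow> real \<Rightarrow> 'a::euclidean_space measure \<Rightarrow> 'a measure \<Rightarrow> real" where
  "RPW p k \<mu> \<nu> = Inf {\<epsilon> \<in> {0..1}. partial_W p (1 - \<epsilon>) \<mu> \<nu> \<le> ennreal (k * \<epsilon>)}"

definition empirical :: "nat \<Rightarrow> (nat \<Rightarrow> 'a::euclidean_space) \<Rightarrow> 'a measure" where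
  "empirical n x = distr (uniform_count_measure {..<n}) borel x"

end

theory Submission
  imports Defs
begin

text \<open>
  Put the support of \<open>\<mu>\<close> in a square of side \<open>2\<close> divided into dyadic cells of side \<open>2^(-J)\<close>,
  \<open>J = 2L\<close> with \<open>64^L \<approx> n\<close>, and transport \<open>\<mu>\<close> to \<open>\<mu>\<^sub>n\<close> greedily along the dyadic hierarchy: at
  level \<open>k = 0, 1, \<dots>, L\<close>, inside every cell of side \<open>2^(k-J)\<close>, match as much of the remaining
  \<open>\<mu>\<close>-mass with the remaining sample mass as possible. Mass matched at level \<open>k\<close> travels at most
  \<open>2^(k-J) \<surd>2\<close>, and the mass left after level \<open>k\<close> is at most the \<open>L\<^sup>1\<close> distance \<open>D\<^sub>k\<close> between
  \<open>\<mu>\<close> and \<open>\<mu>\<^sub>n\<close> on the level-\<open>k\<close> cells. Hoeffding's inequality and a union bound over sign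
  patterns give \<open>D\<^sub>k \<le> 7 \<cdot> 2^(J-k) (ln n / n)^(1/2)\<close> for all \<open>k \<le> L\<close> with probability at
  least \<open>1 - 1/n\<close>. Stopping after level \<open>L\<close> leaves \<open>\<epsilon> = O(n^(-1/3) ln n)\<close> of the mass unmatched at
  a cost \<open>O(\<epsilon>\<^sup>2)\<close>, hence \<open>RPW 2 1 \<mu> \<mu>\<^sub>n \<le> \<epsilon>\<close>.
\<close>

section \<open>Dyadic cells\<close>

definition dyadic_ancestor :: "nat \<Rightarrow> int \<times> int \<Rightarrow> int \<times> int" where
  "dyadic_ancestor k c = (fst c div 2 ^ k, snd c div 2 ^ k)"

lemma dyadic_ancestor_dyadic_ancestor:
  "dyadic_ancestor k' (dyadic_ancestor k c) = dyadic_ancestor (k + k') c"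
  by (simp add: dyadic_ancestor_def power_add zdiv_zmult2_eq)

lemma dyadic_ancestor_eq_mono:
  assumes "k \<le> k'" and "dyadic_ancestor k c = dyadic_ancestor k c'"
  shows "dyadic_ancestor k' c = dyadic_ancestor k' c'"
  by (metis assms dyadic_ancestor_dyadic_ancestor le_add_diff_inverse)

definition dyadic_box :: "nat \<Rightarrow> (int \<times> int) set" where
  "dyadic_box J = {-(2 ^ J)..2 ^ J} \<times> {-(2 ^ J)..2 ^ J}"

lemma finite_dyadic_box [simp]: "finite (dyadic_box J)"
  by (simp add: dyadic_box_def)

lemma dyadic_ancestor_in_dyadic_box:
  assumes "k \<le> J" and "c \<in> dyadic_box J"
  shows "dyadic_ancestor k c \<in> dyadic_box (J - k)"
proof -
  have J: "(2::int) ^ J = 2 ^ (J - k) * 2 ^ k"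
    using assms(1) by (simp flip: power_add)
  have "a div 2 ^ k \<in> {-(2 ^ (J - k))..2 ^ (J - k)}" if "a \<in> {-(2 ^ J)..2 ^ J}" for a :: int
  proof -
    have "(- (2 ^ (J - k)) * 2 ^ k) div (2::int) ^ k = - (2 ^ (J - k))"
      by (rule nonzero_mult_div_cancel_right) simp
    then have "(- (2 ^ J)) div (2::int) ^ k = - (2 ^ (J - k))"
      unfolding J by (simp only: minus_mult_left)
    moreover have "(2::int) ^ J div 2 ^ k = 2 ^ (J - k)"
      unfolding J by simp
    ultimately show ?thesis
      using that zdiv_mono1[of a "2 ^ J" "2 ^ k"] zdiv_mono1[of "- (2 ^ J)" a "2 ^ k"] by auto
  qed
  with assms(2) show ?thesis
    by (auto simp: dyadic_ancestor_def dyadic_box_def mem_Times_iff)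
qed

lemma card_dyadic_box: "real (card (dyadic_box J)) = (2 * 2 ^ J + 1)\<^sup>2"
proof -
  have "int (card {-((2::int) ^ J)..2 ^ J}) = 2 * 2 ^ J + 1"
    by simp
  then have "real (card {-((2::int) ^ J)..2 ^ J}) = 2 * 2 ^ J + 1"
    using arg_cong[of _ _ real_of_int] by simp
  then show ?thesis
    by (simp add: dyadic_box_def card_cartesian_product power2_eq_square)
qed

lemma card_dyadic_ancestor_image_le:
  assumes "k \<le> J"
  shows "real (card (dyadic_ancestor k ` dyadic_box J)) \<le> 9 * (2 ^ J / 2 ^ k)\<^sup>2"
proof -
  have "card (dyadic_ancestor k ` dyadic_box J) \<le> card (dyadic_box (J - k))"
    using dyadic_ancestor_in_dyadic_box[OF assms] by (intro card_mono) auto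
  then have "real (card (dyadic_ancestor k ` dyadic_box J)) \<le> (2 * 2 ^ (J - k) + 1)\<^sup>2"
    unfolding card_dyadic_box[symmetric] by linarith
  also have "\<dots> \<le> (3 * 2 ^ (J - k))\<^sup>2"
    by (intro power_mono) auto
  also have "\<dots> = 9 * (2 ^ J / 2 ^ k)\<^sup>2"
    using assms by (simp add: power_diff power_mult_distrib power_divide)
  finally show ?thesis .
qed

section \<open>Greedy matching along the dyadic hierarchy\<close>

text \<open>The weights \<open>p c\<close> of the finest cells \<open>c \<in> S\<close> are matched with the weights \<open>q i\<close> of the
  sample points \<open>i < n\<close>, the \<open>i\<close>-th of which lies in the finest cell \<open>sample_cell i\<close>. At level \<open>k\<close>,
  inside every level-\<open>k\<close> cell, the minimum of the remaining cell mass and sample mass is matched,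
  proportionally to the remaining weights.\<close>

locale hierarchical_matching =
  fixes S :: "(int \<times> int) set" and n :: nat and sample_cell :: "nat \<Rightarrow> int \<times> int"
    and p :: "int \<times> int \<Rightarrow> real" and q :: "nat \<Rightarrow> real"
  assumes finite_S: "finite S" and p_nonneg: "\<And>c. 0 \<le> p c" and q_nonneg: "\<And>i. 0 \<le> q i"
begin

definition cell_mass :: "nat \<Rightarrow> (int \<times> int \<Rightarrow> real) \<Rightarrow> int \<times> int \<Rightarrow> real" where
  "cell_mass k r a = sum r {c \<in> S. dyadic_ancestor k c = a}"

definition sample_mass :: "nat \<Rightarrow> (nat \<Rightarrow> real) \<Rightarrow> int \<times> int \<Rightarrow> real" where
  "sample_mass k d a = sum d {i \<in> {..<n}. dyadic_ancestor k (sample_cell i) = a}"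

definition matched_mass :: "nat \<Rightarrow> (int \<times> int \<Rightarrow> real) \<Rightarrow> (nat \<Rightarrow> real) \<Rightarrow> int \<times> int \<Rightarrow> real" where
  "matched_mass k r d a = min (cell_mass k r a) (sample_mass k d a)"

definition step_coupling ::
    "nat \<Rightarrow> (int \<times> int \<Rightarrow> real) \<Rightarrow> (nat \<Rightarrow> real) \<Rightarrow> int \<times> int \<Rightarrow> nat \<Rightarrow> real" where
  "step_coupling k r d c i =
     (let a = dyadic_ancestor k c in
      if a = dyadic_ancestor k (sample_cell i)
      then r c * d i * (matched_mass k r d a / (cell_mass k r a * sample_mass k d a)) else 0)"

definition match_step ::
    "nat \<Rightarrow> (int \<times> int \<Rightarrow> real) \<Rightarrow> (nat \<Rightarrow> real) \<Rightarrow> (int \<times> int \<Rightarrow> real) \<times> (nat \<Rightarrow> real)" where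
  "match_step k r d =
     (\<lambda>c. r c * (1 - matched_mass k r d (dyadic_ancestor k c) / cell_mass k r (dyadic_ancestor k c)),
      \<lambda>i. d i * (1 - matched_mass k r d (dyadic_ancestor k (sample_cell i)) / sample_mass k d (dyadic_ancestor k (sample_cell i))))"

primrec residual :: "nat \<Rightarrow> (int \<times> int \<Rightarrow> real) \<times> (nat \<Rightarrow> real)" where
  "residual 0 = (p, q)"
| "residual (Suc k) = match_step k (fst (residual k)) (snd (residual k))"

abbreviation "residual_cells k \<equiv> fst (residual k)"
abbreviation "residual_samples k \<equiv> snd (residual k)"

definition discrepancy :: "nat \<Rightarrow> real" where
  "discrepancy k = (\<Sum>a\<in>dyadic_ancestor k ` S. \<bar>cell_mass k p a - sample_mass k q a\<bar>)"

definition level_coupling :: "nat \<Rightarrow> int \<times> int \<Rightarrow> nat \<Rightarrow> real" where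
  "level_coupling k = step_coupling k (residual_cells k) (residual_samples k)"

context
  fixes k :: nat and r :: "int \<times> int \<Rightarrow> real" and d :: "nat \<Rightarrow> real"
  assumes r_nonneg: "\<And>c. 0 \<le> r c" and d_nonneg: "\<And>i. 0 \<le> d i"
begin

lemma cell_mass_nonneg: "0 \<le> cell_mass k r a"
  unfolding cell_mass_def by (intro sum_nonneg r_nonneg)

lemma sample_mass_nonneg: "0 \<le> sample_mass k d a"
  unfolding sample_mass_def by (intro sum_nonneg d_nonneg)

lemma matched_mass_nonneg: "0 \<le> matched_mass k r d a"
  unfolding matched_mass_def using cell_mass_nonneg sample_mass_nonneg by simp

lemma matched_mass_le: "matched_mass k r d a \<le> cell_mass k r a"
  unfolding matched_mass_def by simp

lemma step_coupling_nonneg: "0 \<le> step_coupling k r d c i"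
  unfolding step_coupling_def Let_def
  using r_nonneg d_nonneg matched_mass_nonneg cell_mass_nonneg sample_mass_nonneg by simp

lemma step_coupling_neq_zero:
  "step_coupling k r d c i \<noteq> 0 \<Longrightarrow> dyadic_ancestor k c = dyadic_ancestor k (sample_cell i)"
  unfolding step_coupling_def Let_def by (auto split: if_splits)

lemma match_step_nonneg:
  "0 \<le> fst (match_step k r d) c" "0 \<le> snd (match_step k r d) i"
proof -
  have "matched_mass k r d a / cell_mass k r a \<le> 1" "matched_mass k r d a / sample_mass k d a \<le> 1" for a
    using cell_mass_nonneg[of a] sample_mass_nonneg[of a]
    by (auto simp: matched_mass_def divide_le_eq_1 min_def)
  then show "0 \<le> fst (match_step k r d) c" "0 \<le> snd (match_step k r d) i"
    unfolding match_step_def using r_nonneg d_nonneg by simp_all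
qed

text \<open>A cell of zero mass carries no matched mass, so the divisions by zero below are harmless.\<close>

lemma matched_mass_div_cancel:
  "matched_mass k r d a / (cell_mass k r a * sample_mass k d a) * sample_mass k d a =
     matched_mass k r d a / cell_mass k r a"
  "matched_mass k r d a / (cell_mass k r a * sample_mass k d a) * cell_mass k r a =
     matched_mass k r d a / sample_mass k d a"
  using matched_mass_nonneg[of a] cell_mass_nonneg[of a] sample_mass_nonneg[of a]
  by (auto simp: matched_mass_def min_def)

lemma step_coupling_row_sum:
  "(\<Sum>i<n. step_coupling k r d c i) + fst (match_step k r d) c = r c"
proof -
  define a where "a = dyadic_ancestor k c"
  define \<kappa> where "\<kappa> = matched_mass k r d a / (cell_mass k r a * sample_mass k d a)"
  have "(\<Sum>i<n. step_coupling k r d c i) = (\<Sum>i | i < n \<and> dyadic_ancestor k (sample_cell i) = a. r c * \<kappa> * d i)"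
    unfolding step_coupling_def Let_def a_def[symmetric] \<kappa>_def[symmetric]
    by (simp add: sum.inter_filter[symmetric] eq_commute mult_ac)
  also have "\<dots> = r c * (\<kappa> * sample_mass k d a)"
    unfolding sample_mass_def by (simp add: sum_distrib_left mult_ac)
  also have "\<dots> = r c * (matched_mass k r d a / cell_mass k r a)"
    unfolding \<kappa>_def matched_mass_div_cancel ..
  moreover have "fst (match_step k r d) c = r c - r c * (matched_mass k r d a / cell_mass k r a)"
    by (simp add: match_step_def a_def right_diff_distrib)
  ultimately show ?thesis
    by linarith
qed

lemma step_coupling_col_sum:
  "(\<Sum>c\<in>S. step_coupling k r d c i) + snd (match_step k r d) i = d i"
proof -
  define a where "a = dyadic_ancestor k (sample_cell i)"
  define \<kappa> where "\<kappa> = matched_mass k r d a / (cell_mass k r a * sample_mass k d a)"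
  have "(\<Sum>c\<in>S. step_coupling k r d c i) = (\<Sum>c | c \<in> S \<and> dyadic_ancestor k c = a. d i * \<kappa> * r c)"
    unfolding step_coupling_def Let_def a_def[symmetric]
    by (simp add: sum.inter_filter[symmetric] finite_S \<kappa>_def mult_ac cong: if_cong)
  also have "\<dots> = d i * (\<kappa> * cell_mass k r a)"
    unfolding cell_mass_def by (simp add: sum_distrib_left mult_ac)
  also have "\<dots> = d i * (matched_mass k r d a / sample_mass k d a)"
    unfolding \<kappa>_def matched_mass_div_cancel ..
  moreover have "snd (match_step k r d) i = d i - d i * (matched_mass k r d a / sample_mass k d a)"
    by (simp add: match_step_def a_def right_diff_distrib)
  ultimately show ?thesis
    by linarith
qed

lemma cell_mass_match_step:
  "cell_mass k (fst (match_step k r d)) a = cell_mass k r a - matched_mass k r d a"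
proof -
  have "cell_mass k (fst (match_step k r d)) a =
      sum (fst (match_step k r d)) {c \<in> S. dyadic_ancestor k c = a}"
    by (simp only: cell_mass_def)
  also have "\<dots> = (\<Sum>c | c \<in> S \<and> dyadic_ancestor k c = a. r c * (1 - matched_mass k r d a / cell_mass k r a))"
    by (intro sum.cong) (auto simp: match_step_def)
  also have "\<dots> = cell_mass k r a * (1 - matched_mass k r d a / cell_mass k r a)"
    unfolding cell_mass_def[of k r a] by (rule sum_distrib_right[symmetric])
  also have "\<dots> = cell_mass k r a - matched_mass k r d a"
    using matched_mass_nonneg[of a] matched_mass_le[of a]
    by (cases "cell_mass k r a = 0") (auto simp: right_diff_distrib)
  finally show ?thesis .
qed

text \<open>Matching at level \<open>k\<close> stays inside level-\<open>k\<close> cells, which refine the level-\<open>k'\<close> cells, so it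
  removes as much cell mass as sample mass from every level-\<open>k'\<close> cell.\<close>

lemma mass_difference_match_step:
  assumes "k \<le> k'"
  shows "cell_mass k' (fst (match_step k r d)) a - sample_mass k' (snd (match_step k r d)) a =
    cell_mass k' r a - sample_mass k' d a"
proof -
  let ?C = "{c \<in> S. dyadic_ancestor k' c = a}" and ?I = "{i \<in> {..<n}. dyadic_ancestor k' (sample_cell i) = a}"
  have inside: "(\<Sum>c\<in>?C. step_coupling k r d c i) =
      (if dyadic_ancestor k' (sample_cell i) = a then \<Sum>c\<in>S. step_coupling k r d c i else 0)" for i
  proof -
    have "(\<Sum>c\<in>?C. step_coupling k r d c i) =
        (\<Sum>c\<in>S. if dyadic_ancestor k' c = a then step_coupling k r d c i else 0)"
      by (rule sum.inter_filter[OF finite_S])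
    also have "\<dots> = (\<Sum>c\<in>S. if dyadic_ancestor k' (sample_cell i) = a then step_coupling k r d c i else 0)"
      by (intro sum.cong refl) (metis dyadic_ancestor_eq_mono[OF assms] step_coupling_neq_zero)
    finally show ?thesis by simp
  qed
  have "cell_mass k' r a - cell_mass k' (fst (match_step k r d)) a =
      (\<Sum>c\<in>?C. \<Sum>i<n. step_coupling k r d c i)"
    unfolding cell_mass_def sum_subtractf[symmetric]
    by (intro sum.cong refl) (metis add_diff_cancel_right' step_coupling_row_sum)
  also have "\<dots> = (\<Sum>i<n. \<Sum>c\<in>?C. step_coupling k r d c i)"
    by (rule sum.swap)
  also have "\<dots> = (\<Sum>i\<in>?I. \<Sum>c\<in>S. step_coupling k r d c i)"
    unfolding inside by (rule sum.inter_filter[symmetric]) simp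
  also have "\<dots> = sample_mass k' d a - sample_mass k' (snd (match_step k r d)) a"
    unfolding sample_mass_def sum_subtractf[symmetric]
    by (intro sum.cong refl) (metis add_diff_cancel_right' step_coupling_col_sum)
  finally show ?thesis by simp
qed

end

end

context hierarchical_matching
begin

lemma residual_nonneg: "0 \<le> residual_cells k c" "0 \<le> residual_samples k i"
proof -
  have "(\<forall>c. 0 \<le> residual_cells k c) \<and> (\<forall>i. 0 \<le> residual_samples k i)"
  proof (induction k)
    case (Suc k)
    then have "\<And>c. 0 \<le> residual_cells k c" "\<And>i. 0 \<le> residual_samples k i"
      by auto
    then show ?case
      using match_step_nonneg by simp
  qed (simp add: p_nonneg q_nonneg)
  then show "0 \<le> residual_cells k c" "0 \<le> residual_samples k i"
    by blast+
qed

lemma mass_difference_residual: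
  "k \<le> k' \<Longrightarrow> cell_mass k' (residual_cells k) a - sample_mass k' (residual_samples k) a =
     cell_mass k' p a - sample_mass k' q a"
proof (induction k arbitrary: a)
  case (Suc k)
  then show ?case
    by (simp add: mass_difference_match_step[OF residual_nonneg(1) residual_nonneg(2)])
qed simp

text \<open>Matching at level \<open>k\<close> exhausts one side of every level-\<open>k\<close> cell, and by the invariance above
  the remaining difference is the original one.\<close>

lemma cell_mass_residual_Suc:
  "cell_mass k (residual_cells (Suc k)) a = max (cell_mass k p a - sample_mass k q a) 0"
  using mass_difference_residual[of k k a]
  unfolding residual.simps cell_mass_match_step[OF residual_nonneg(1) residual_nonneg(2)]
  by (simp add: matched_mass_def)

lemma sum_residual_cells_le_discrepancy: "sum (residual_cells (Suc k)) S \<le> discrepancy k"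
proof -
  have "sum (residual_cells (Suc k)) S = (\<Sum>a\<in>dyadic_ancestor k ` S. cell_mass k (residual_cells (Suc k)) a)"
    unfolding cell_mass_def by (rule sum.image_gen[OF finite_S])
  also have "\<dots> \<le> discrepancy k"
    unfolding discrepancy_def cell_mass_residual_Suc by (intro sum_mono) linarith
  finally show ?thesis .
qed

lemma level_coupling_nonneg: "0 \<le> level_coupling k c i"
  unfolding level_coupling_def by (rule step_coupling_nonneg[OF residual_nonneg(1) residual_nonneg(2)])

lemma level_coupling_neq_zero:
  "level_coupling k c i \<noteq> 0 \<Longrightarrow> dyadic_ancestor k c = dyadic_ancestor k (sample_cell i)"
  unfolding level_coupling_def by (rule step_coupling_neq_zero[OF residual_nonneg(1) residual_nonneg(2)])

lemma level_coupling_row_sum: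
  "(\<Sum>k<K. \<Sum>i<n. level_coupling k c i) = p c - residual_cells K c"
proof (induction K)
  case (Suc K)
  have "(\<Sum>i<n. level_coupling K c i) + residual_cells (Suc K) c = residual_cells K c"
    unfolding level_coupling_def residual.simps
    by (rule step_coupling_row_sum[OF residual_nonneg(1) residual_nonneg(2)])
  with Suc show ?case by simp
qed simp

lemma level_coupling_col_sum:
  "(\<Sum>k<K. \<Sum>c\<in>S. level_coupling k c i) = q i - residual_samples K i"
proof (induction K)
  case (Suc K)
  have "(\<Sum>c\<in>S. level_coupling K c i) + residual_samples (Suc K) i = residual_samples K i"
    unfolding level_coupling_def residual.simps
    by (rule step_coupling_col_sum[OF residual_nonneg(1) residual_nonneg(2)])
  with Suc show ?case by simp
qed simp

lemma level_coupling_mass: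
  "(\<Sum>c\<in>S. \<Sum>i<n. level_coupling k c i) = sum (residual_cells k) S - sum (residual_cells (Suc k)) S"
proof -
  have "(\<Sum>i<n. level_coupling k c i) = residual_cells k c - residual_cells (Suc k) c" for c
    using level_coupling_row_sum[of c "Suc k"] level_coupling_row_sum[of c k] by simp
  then show ?thesis
    by (simp add: sum_subtractf)
qed

definition coupling :: "nat \<Rightarrow> int \<times> int \<Rightarrow> nat \<Rightarrow> real" where
  "coupling K c i = (\<Sum>k<K. level_coupling k c i)"

lemma coupling_nonneg: "0 \<le> coupling K c i"
  unfolding coupling_def by (intro sum_nonneg level_coupling_nonneg)

lemma coupling_row_sum: "(\<Sum>i<n. coupling K c i) = p c - residual_cells K c"
  unfolding coupling_def by (subst sum.swap) (rule level_coupling_row_sum)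

lemma coupling_col_sum: "(\<Sum>c\<in>S. coupling K c i) = q i - residual_samples K i"
  unfolding coupling_def by (subst sum.swap) (rule level_coupling_col_sum)

lemma coupling_mass: "(\<Sum>c\<in>S. \<Sum>i<n. coupling K c i) = sum p S - sum (residual_cells K) S"
  by (simp add: coupling_row_sum sum_subtractf)

text \<open>The mass matched at level \<open>0\<close> is at most the total mass, and the mass matched at level
  \<open>j + 1\<close> is at most what level \<open>j\<close> left unmatched.\<close>

lemma level_coupling_cost_le:
  assumes "\<And>k. 0 \<le> w k"
  shows "(\<Sum>c\<in>S. \<Sum>i<n. \<Sum>k<Suc K. level_coupling k c i * w k) \<le>
    w 0 * sum p S + (\<Sum>j<K. w (Suc j) * discrepancy j)"
proof -
  have residual_mass_nonneg: "0 \<le> sum (residual_cells k) S" for k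
    by (intro sum_nonneg residual_nonneg(1))
  have level_0: "(\<Sum>c\<in>S. \<Sum>i<n. level_coupling 0 c i) \<le> sum p S"
    using residual_mass_nonneg[of 1] unfolding level_coupling_mass by simp
  have level_Suc: "(\<Sum>c\<in>S. \<Sum>i<n. level_coupling (Suc j) c i) \<le> discrepancy j" for j
    using sum_residual_cells_le_discrepancy[of j] residual_mass_nonneg[of "Suc (Suc j)"]
    unfolding level_coupling_mass by linarith
  have "(\<Sum>c\<in>S. \<Sum>i<n. \<Sum>k<Suc K. level_coupling k c i * w k) =
      (\<Sum>k<Suc K. \<Sum>c\<in>S. \<Sum>i<n. level_coupling k c i * w k)"
    by (subst sum.swap) (simp add: sum.swap[of _ "{..<n}"])
  also have "\<dots> = (\<Sum>k<Suc K. w k * (\<Sum>c\<in>S. \<Sum>i<n. level_coupling k c i))"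
    by (simp add: sum_distrib_left sum_distrib_right mult.commute)
  also have "\<dots> \<le> w 0 * sum p S + (\<Sum>j<K. w (Suc j) * discrepancy j)"
    unfolding sum.lessThan_Suc_shift by (intro add_mono mult_left_mono level_0 level_Suc sum_mono assms)
  finally show ?thesis .
qed

end

section \<open>Transport plans given by kernels\<close>

lemma nn_integral_count_space_pair:
  fixes n :: nat
  assumes "sigma_finite_measure M" and "f \<in> borel_measurable (count_space {..<n} \<Otimes>\<^sub>M M)"
  shows "(\<integral>\<^sup>+ z. f z \<partial>(count_space {..<n} \<Otimes>\<^sub>M M)) = (\<Sum>i<n. \<integral>\<^sup>+ y. f (i, y) \<partial>M)"
proof -
  have "(\<integral>\<^sup>+ z. f z \<partial>(count_space {..<n} \<Otimes>\<^sub>M M)) = (\<integral>\<^sup>+ i. \<integral>\<^sup>+ y. f (i, y) \<partial>M \<partial>count_space {..<n})"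
    using sigma_finite_measure.nn_integral_fst[OF assms] by simp
  also have "\<dots> = (\<Sum>i<n. \<integral>\<^sup>+ y. f (i, y) \<partial>M)"
    by (rule nn_integral_count_space_finite) simp
  finally show ?thesis .
qed

lemma measurable_count_space_pair:
  fixes n :: nat
  assumes "\<And>i. i < n \<Longrightarrow> (\<lambda>y. f (i, y)) \<in> measurable M N"
  shows "f \<in> measurable (count_space {..<n} \<Otimes>\<^sub>M M) N"
  using assms by (intro measurable_pair_measure_countable1 countable_finite) auto

lemma emeasure_empirical:
  assumes "B \<in> sets borel"
  shows "emeasure (empirical n x) B = card {i \<in> {..<n}. x i \<in> B} / n"
proof -
  have "emeasure (empirical n x) B = emeasure (uniform_count_measure {..<n}) (x -` B \<inter> {..<n})"
    unfolding empirical_def using assms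
    by (subst emeasure_distr) (auto simp: sets_uniform_count_measure space_uniform_count_measure)
  also have "\<dots> = card (x -` B \<inter> {..<n}) / card {..<n}"
    by (rule emeasure_uniform_count_measure) auto
  also have "x -` B \<inter> {..<n} = {i \<in> {..<n}. x i \<in> B}"
    by auto
  finally show ?thesis
    by (simp add: ennreal_of_nat_eq_real_of_nat divide_ennreal)
qed

text \<open>The coupling that sends the mass \<open>h y i d\<mu>(y)\<close> from \<open>y\<close> to the sample point \<open>x i\<close>.\<close>

definition kernel_plan ::
    "'a::euclidean_space measure \<Rightarrow> ('a \<Rightarrow> nat \<Rightarrow> real) \<Rightarrow> (nat \<Rightarrow> 'a) \<Rightarrow> nat \<Rightarrow> ('a \<times> 'a) measure" where
  "kernel_plan \<mu> h x n =
     distr (density (count_space {..<n} \<Otimes>\<^sub>M \<mu>) (\<lambda>z. ennreal (h (snd z) (fst z)))) borel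
       (\<lambda>z. (snd z, x (fst z)))"

lemma sets_kernel_plan [simp]: "sets (kernel_plan \<mu> h x n) = sets borel"
  by (simp add: kernel_plan_def)

lemma space_kernel_plan [simp]: "space (kernel_plan \<mu> h x n) = UNIV"
  by (simp add: kernel_plan_def)

context
  fixes \<mu> :: "'a::euclidean_space measure" and h :: "'a \<Rightarrow> nat \<Rightarrow> real" and x :: "nat \<Rightarrow> 'a" and n :: nat
  assumes sigma_finite: "sigma_finite_measure \<mu>" and sets_\<mu>: "sets \<mu> = sets borel"
    and h_measurable: "\<And>i. (\<lambda>y. h y i) \<in> borel_measurable borel" and h_nonneg: "\<And>y i. 0 \<le> h y i"
begin

lemma nn_integral_kernel_plan:
  assumes g: "g \<in> borel_measurable borel"
  shows "(\<integral>\<^sup>+ z. g z \<partial>kernel_plan \<mu> h x n) = (\<Sum>i<n. \<integral>\<^sup>+ y. ennreal (h y i) * g (y, x i) \<partial>\<mu>)"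
proof -
  let ?P = "count_space {..<n} \<Otimes>\<^sub>M \<mu>"
  have measurable_\<mu>: "f \<in> measurable \<mu> N" if "f \<in> measurable borel N" for f and N :: "'b measure"
    using that measurable_cong_sets[OF sets_\<mu> refl] by blast
  have "(\<lambda>y. ennreal (h y i)) \<in> borel_measurable \<mu>" for i
    by (intro measurable_\<mu> measurable_compose[OF h_measurable measurable_ennreal])
  then have density: "(\<lambda>z. ennreal (h (snd z) (fst z))) \<in> borel_measurable ?P"
    by (intro measurable_count_space_pair) simp
  have "(\<lambda>y. (y, x i)) \<in> measurable \<mu> borel" for i
    by (intro measurable_\<mu> borel_measurable_continuous_onI continuous_intros)
  then have transport: "(\<lambda>z. (snd z, x (fst z))) \<in> measurable ?P borel"
    by (intro measurable_count_space_pair) simp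
  have "(\<integral>\<^sup>+ z. g z \<partial>kernel_plan \<mu> h x n) =
      (\<integral>\<^sup>+ z. ennreal (h (snd z) (fst z)) * g (snd z, x (fst z)) \<partial>?P)"
    unfolding kernel_plan_def using density transport g
    by (simp add: nn_integral_distr nn_integral_density measurable_compose[OF transport g])
  also have "\<dots> = (\<Sum>i<n. \<integral>\<^sup>+ y. ennreal (h y i) * g (y, x i) \<partial>\<mu>)"
    using borel_measurable_times_ennreal[OF density measurable_compose[OF transport g]]
    by (subst nn_integral_count_space_pair[OF sigma_finite]) simp_all
  finally show ?thesis .
qed

lemma emeasure_kernel_plan:
  assumes "T \<in> sets borel"
  shows "emeasure (kernel_plan \<mu> h x n) T = (\<Sum>i<n. \<integral>\<^sup>+ y. ennreal (h y i) * indicator T (y, x i) \<partial>\<mu>)"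
  using nn_integral_kernel_plan[of "indicator T"] assms by simp

lemma emeasure_kernel_plan_fst_le:
  assumes row: "\<And>y. (\<Sum>i<n. h y i) \<le> 1" and A: "A \<in> sets borel"
  shows "emeasure (kernel_plan \<mu> h x n) (A \<times> UNIV) \<le> emeasure \<mu> A"
proof -
  have h_\<mu>: "(\<lambda>y. ennreal (h y i)) \<in> borel_measurable \<mu>" for i
    using measurable_compose[OF h_measurable measurable_ennreal] measurable_cong_sets[OF sets_\<mu> refl]
    by blast
  have "emeasure (kernel_plan \<mu> h x n) (A \<times> UNIV) = (\<Sum>i<n. \<integral>\<^sup>+ y. ennreal (h y i) * indicator A y \<partial>\<mu>)"
    using A by (simp add: emeasure_kernel_plan borel_Times indicator_def)
  also have "\<dots> = (\<integral>\<^sup>+ y. (\<Sum>i<n. ennreal (h y i)) * indicator A y \<partial>\<mu>)"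
    unfolding sum_distrib_right using A sets_\<mu> h_\<mu>
    by (intro nn_integral_sum[symmetric] borel_measurable_times_ennreal) auto
  also have "\<dots> \<le> (\<integral>\<^sup>+ y. indicator A y \<partial>\<mu>)"
  proof (intro nn_integral_mono)
    fix y
    have "(\<Sum>i<n. ennreal (h y i)) \<le> 1"
      using row[of y] by (simp add: sum_ennreal h_nonneg)
    then show "(\<Sum>i<n. ennreal (h y i)) * indicator A y \<le> indicator A y"
      by (simp add: indicator_def)
  qed
  finally show ?thesis
    using A sets_\<mu> by simp
qed

lemma emeasure_kernel_plan_snd_le:
  assumes col: "\<And>i. i < n \<Longrightarrow> (\<integral>\<^sup>+ y. h y i \<partial>\<mu>) \<le> 1 / real n" and B: "B \<in> sets borel"
  shows "emeasure (kernel_plan \<mu> h x n) (UNIV \<times> B) \<le> emeasure (empirical n x) B"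
proof -
  have h_\<mu>: "(\<lambda>y. ennreal (h y i)) \<in> borel_measurable \<mu>" for i
    using measurable_compose[OF h_measurable measurable_ennreal] measurable_cong_sets[OF sets_\<mu> refl]
    by blast
  have "emeasure (kernel_plan \<mu> h x n) (UNIV \<times> B) = (\<Sum>i<n. \<integral>\<^sup>+ y. ennreal (h y i) * indicator B (x i) \<partial>\<mu>)"
    using B by (simp add: emeasure_kernel_plan borel_Times indicator_def)
  also have "\<dots> = (\<Sum>i<n. (\<integral>\<^sup>+ y. h y i \<partial>\<mu>) * indicator B (x i))"
    using h_\<mu> by (intro sum.cong refl nn_integral_multc)
  also have "\<dots> \<le> (\<Sum>i<n. ennreal (1 / real n) * indicator B (x i))"
    using col by (intro sum_mono mult_right_mono) auto
  also have "\<dots> = (\<Sum>i\<in>{i \<in> {..<n}. x i \<in> B}. ennreal (1 / real n))"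
    by (simp add: sum.inter_filter indicator_def Int_def)
  also have "\<dots> = emeasure (empirical n x) B"
    using B by (simp add: emeasure_empirical ennreal_of_nat_eq_real_of_nat ennreal_mult[symmetric]
        divide_ennreal divide_inverse)
  finally show ?thesis .
qed

lemma kernel_plan_in_partial_plans:
  assumes "\<And>y. (\<Sum>i<n. h y i) \<le> 1"
    and "\<And>i. i < n \<Longrightarrow> (\<integral>\<^sup>+ y. h y i \<partial>\<mu>) \<le> 1 / real n"
    and "(\<Sum>i<n. \<integral>\<^sup>+ y. h y i \<partial>\<mu>) = ennreal \<alpha>"
  shows "kernel_plan \<mu> h x n \<in> partial_plans \<alpha> \<mu> (empirical n x)"
  using assms emeasure_kernel_plan_fst_le emeasure_kernel_plan_snd_le
  by (simp add: partial_plans_def emeasure_kernel_plan)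

end

lemma wcost_2_le:
  assumes "(\<integral>\<^sup>+ z. ennreal ((dist (fst z) (snd z))\<^sup>2) \<partial>\<gamma>) \<le> ennreal (\<epsilon>\<^sup>2)" and "0 \<le> \<epsilon>"
  shows "wcost 2 \<gamma> \<le> ennreal \<epsilon>"
proof -
  let ?I = "\<integral>\<^sup>+ z. ennreal (dist (fst z) (snd z) powr 2) \<partial>\<gamma>"
  have "?I \<le> ennreal (\<epsilon>\<^sup>2)"
    using assms(1) by simp
  then have "?I \<noteq> \<infinity>" and "enn2real ?I \<le> \<epsilon>\<^sup>2"
    by (auto simp: top_unique enn2real_leI)
  moreover have "enn2real ?I powr (1 / 2) \<le> (\<epsilon>\<^sup>2) powr (1 / 2)" if "enn2real ?I \<le> \<epsilon>\<^sup>2"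
    using that by (intro powr_mono2) auto
  ultimately show ?thesis
    using assms(2) by (simp add: wcost_def powr_half_sqrt ennreal_leI)
qed

lemma partial_W_le_of_kernel:
  fixes \<mu> :: "'a::euclidean_space measure"
  assumes "sigma_finite_measure \<mu>" and "sets \<mu> = sets borel"
    and "\<And>i. (\<lambda>y. h y i) \<in> borel_measurable borel" and h_nonneg: "\<And>y i. 0 \<le> h y i"
    and "\<And>y. (\<Sum>i<n. h y i) \<le> 1"
    and "\<And>i. i < n \<Longrightarrow> (\<integral>\<^sup>+ y. h y i \<partial>\<mu>) \<le> 1 / real n"
    and "(\<Sum>i<n. \<integral>\<^sup>+ y. h y i \<partial>\<mu>) = ennreal (1 - \<epsilon>)"
    and cost: "(\<Sum>i<n. \<integral>\<^sup>+ y. ennreal (h y i * (dist y (x i))\<^sup>2) \<partial>\<mu>) \<le> ennreal (\<epsilon>\<^sup>2)"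
    and "0 \<le> \<epsilon>"
  shows "partial_W 2 (1 - \<epsilon>) \<mu> (empirical n x) \<le> ennreal \<epsilon>"
proof -
  have dist_sq: "(\<lambda>z. (dist (fst z) (snd z))\<^sup>2) \<in> borel_measurable borel"
    by (intro borel_measurable_continuous_onI continuous_intros)
  have "(\<integral>\<^sup>+ z. ennreal ((dist (fst z) (snd z))\<^sup>2) \<partial>kernel_plan \<mu> h x n) =
      (\<Sum>i<n. \<integral>\<^sup>+ y. ennreal (h y i * (dist y (x i))\<^sup>2) \<partial>\<mu>)"
    using nn_integral_kernel_plan[where h = h and x = x and n = n, OF assms(1-4)
        measurable_compose[OF dist_sq measurable_ennreal]]
    by (simp add: ennreal_mult h_nonneg)
  then have "wcost 2 (kernel_plan \<mu> h x n) \<le> ennreal \<epsilon>"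
    using cost assms by (intro wcost_2_le) simp_all
  moreover have "kernel_plan \<mu> h x n \<in> partial_plans (1 - \<epsilon>) \<mu> (empirical n x)"
    using assms by (intro kernel_plan_in_partial_plans)
  ultimately show ?thesis
    unfolding partial_W_def by (meson INF_lower2)
qed

lemma RPW_le:
  assumes "0 \<le> \<epsilon>" and "\<epsilon> \<le> 1" and "partial_W 2 (1 - \<epsilon>) \<mu> \<nu> \<le> ennreal \<epsilon>"
  shows "RPW 2 1 \<mu> \<nu> \<le> \<epsilon>"
  unfolding RPW_def by (rule cInf_lower) (use assms in \<open>auto intro!: bdd_belowI[of _ 0]\<close>)

lemma RPW_le_1: "RPW 2 1 \<mu> \<nu> \<le> 1"
proof (rule RPW_le)
  let ?\<gamma> = "null_measure borel"
  have "?\<gamma> \<in> partial_plans 0 \<mu> \<nu>" and "wcost 2 ?\<gamma> = 0"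
    by (simp_all add: partial_plans_def wcost_def)
  then show "partial_W 2 (1 - 1) \<mu> \<nu> \<le> ennreal 1"
    unfolding partial_W_def by (metis INF_lower2 diff_self ennreal_1 zero_le)
qed auto

section \<open>Transport plans from couplings of cells\<close>

definition cell_spread :: "'a::topological_space measure \<Rightarrow> ('a \<Rightarrow> 'c) \<Rightarrow> 'c set \<Rightarrow> ('c \<Rightarrow> real) \<Rightarrow> 'a \<Rightarrow> real"
  where "cell_spread \<mu> cell S F y =
    (if cell y \<in> S \<and> measure \<mu> (cell -` {cell y}) \<noteq> 0 then F (cell y) / measure \<mu> (cell -` {cell y}) else 0)"

lemma cell_spread_nonneg: "(\<And>c. 0 \<le> F c) \<Longrightarrow> 0 \<le> cell_spread \<mu> cell S F y"
  by (simp add: cell_spread_def)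

lemma borel_measurable_cell_spread:
  assumes "cell \<in> measurable borel (count_space UNIV)"
  shows "cell_spread \<mu> cell S F \<in> borel_measurable borel"
proof -
  let ?g = "\<lambda>c. if c \<in> S \<and> measure \<mu> (cell -` {c}) \<noteq> 0 then F c / measure \<mu> (cell -` {c}) else 0"
  have "(\<lambda>y. ?g (cell y)) \<in> borel_measurable borel"
    using measurable_compose[OF assms borel_measurable_count_space] .
  moreover have "(\<lambda>y. ?g (cell y)) = cell_spread \<mu> cell S F"
    by (simp add: fun_eq_iff cell_spread_def)
  ultimately show ?thesis
    by simp
qed

lemma sum_cell_spread: "(\<Sum>i\<in>I. cell_spread \<mu> cell S (F i) y) = cell_spread \<mu> cell S (\<lambda>c. \<Sum>i\<in>I. F i c) y"
  by (cases "cell y \<in> S"; cases "measure \<mu> (cell -` {cell y}) = 0")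
    (simp_all add: cell_spread_def sum_divide_distrib)

lemma cell_spread_le_one:
  assumes "\<And>c. c \<in> S \<Longrightarrow> F c \<le> measure \<mu> (cell -` {c})"
  shows "cell_spread \<mu> cell S F y \<le> 1"
  using assms[of "cell y"] by (auto simp: cell_spread_def divide_le_eq_1 less_le)

lemma cell_spread_mult_le:
  assumes "cell y \<in> S \<Longrightarrow> F (cell y) * g \<le> G (cell y)"
  shows "cell_spread \<mu> cell S F y * g \<le> cell_spread \<mu> cell S G y"
proof -
  have "F (cell y) * g / measure \<mu> (cell -` {cell y}) \<le> G (cell y) / measure \<mu> (cell -` {cell y})"
    if "cell y \<in> S" using assms[OF that] by (rule divide_right_mono) simp
  then show ?thesis
    by (simp add: cell_spread_def)
qed

lemma nn_integral_cell_spread: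
  assumes "finite_measure \<mu>" and sets_\<mu>: "sets \<mu> = sets borel"
    and cell: "cell \<in> measurable borel (count_space UNIV)"
    and "finite S" and F_nonneg: "\<And>c. 0 \<le> F c"
  shows "(\<integral>\<^sup>+ y. cell_spread \<mu> cell S F y \<partial>\<mu>) =
    ennreal (\<Sum>c\<in>S. if measure \<mu> (cell -` {c}) = 0 then 0 else F c)"
proof -
  interpret finite_measure \<mu> by fact
  have cell_sets: "cell -` {c} \<in> sets \<mu>" for c
    using measurable_sets[OF cell, of "{c}"] sets_\<mu> by simp
  have "ennreal (cell_spread \<mu> cell S F y) =
      (\<Sum>c\<in>S. ennreal (F c / measure \<mu> (cell -` {c})) * indicator (cell -` {c}) y)" for y
  proof (cases "cell y \<in> S")
    case True
    have "(\<Sum>c\<in>S - {cell y}. ennreal (F c / measure \<mu> (cell -` {c})) * indicator (cell -` {c}) y) = 0"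
      by (intro sum.neutral) (auto simp: indicator_def)
    with True show ?thesis
      by (simp add: sum.remove[OF \<open>finite S\<close> True] indicator_def cell_spread_def)
  next
    case False
    then have "(\<Sum>c\<in>S. ennreal (F c / measure \<mu> (cell -` {c})) * indicator (cell -` {c}) y) = 0"
      by (intro sum.neutral) (auto simp: indicator_def)
    with False show ?thesis
      by (simp add: cell_spread_def)
  qed
  then have "(\<integral>\<^sup>+ y. cell_spread \<mu> cell S F y \<partial>\<mu>) =
      (\<Sum>c\<in>S. \<integral>\<^sup>+ y. ennreal (F c / measure \<mu> (cell -` {c})) * indicator (cell -` {c}) y \<partial>\<mu>)"
    using cell_sets by (simp add: nn_integral_sum)
  also have "\<dots> = (\<Sum>c\<in>S. ennreal (if measure \<mu> (cell -` {c}) = 0 then 0 else F c))"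
    using cell_sets F_nonneg
    by (intro sum.cong refl) (simp add: nn_integral_cmult_indicator emeasure_eq_measure ennreal_mult'[symmetric])
  also have "\<dots> = ennreal (\<Sum>c\<in>S. if measure \<mu> (cell -` {c}) = 0 then 0 else F c)"
    using F_nonneg by (simp add: sum_ennreal)
  finally show ?thesis .
qed

lemma nn_integral_cell_spread_mult_le:
  assumes "finite_measure \<mu>" and "sets \<mu> = sets borel"
    and "cell \<in> measurable borel (count_space UNIV)" and "finite S"
    and G_nonneg: "\<And>c. 0 \<le> G c" and FG: "\<And>y. cell y \<in> S \<Longrightarrow> F (cell y) * g y \<le> G (cell y)"
  shows "(\<integral>\<^sup>+ y. ennreal (cell_spread \<mu> cell S F y * g y) \<partial>\<mu>) \<le> ennreal (sum G S)"
proof -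
  have "(\<integral>\<^sup>+ y. ennreal (cell_spread \<mu> cell S F y * g y) \<partial>\<mu>) \<le> (\<integral>\<^sup>+ y. cell_spread \<mu> cell S G y \<partial>\<mu>)"
    using FG by (intro nn_integral_mono ennreal_leI cell_spread_mult_le)
  also have "\<dots> \<le> ennreal (sum G S)"
    unfolding nn_integral_cell_spread[OF assms(1-5)] using G_nonneg by (intro ennreal_leI sum_mono) auto
  finally show ?thesis .
qed

lemma partial_W_le_of_exact_cell_coupling:
  fixes \<mu> :: "'a::euclidean_space measure" and cell :: "'a \<Rightarrow> 'c" and B w :: "'c \<Rightarrow> nat \<Rightarrow> real"
  assumes "prob_space \<mu>" and sets_\<mu>: "sets \<mu> = sets borel"
    and cell: "cell \<in> measurable borel (count_space UNIV)" and "finite S"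
    and B_nonneg: "\<And>c i. 0 \<le> B c i"
    and row: "\<And>c. c \<in> S \<Longrightarrow> (\<Sum>i<n. B c i) \<le> measure \<mu> (cell -` {c})"
    and col: "\<And>i. i < n \<Longrightarrow> (\<Sum>c\<in>S. B c i) \<le> 1 / real n"
    and mass: "(\<Sum>c\<in>S. \<Sum>i<n. B c i) = 1 - \<epsilon>"
    and w_nonneg: "\<And>c i. 0 \<le> w c i"
    and w: "\<And>c i y. c \<in> S \<Longrightarrow> i < n \<Longrightarrow> cell y = c \<Longrightarrow> B c i * (dist y (x i))\<^sup>2 \<le> w c i"
    and cost: "(\<Sum>c\<in>S. \<Sum>i<n. w c i) \<le> \<epsilon>\<^sup>2"
    and "0 \<le> \<epsilon>"
  shows "partial_W 2 (1 - \<epsilon>) \<mu> (empirical n x) \<le> ennreal \<epsilon>"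
proof -
  interpret prob_space \<mu> by fact
  note finite = finite_measure_axioms sets_\<mu> cell \<open>finite S\<close>
  define h where "h y i = cell_spread \<mu> cell S (\<lambda>c. B c i) y" for y i
  have "(\<lambda>y. h y i) \<in> borel_measurable borel" for i
    unfolding h_def using borel_measurable_cell_spread[OF cell] by simp
  moreover have h_nonneg: "0 \<le> h y i" for y i
    unfolding h_def using B_nonneg by (simp add: cell_spread_nonneg)
  moreover have "(\<Sum>i<n. h y i) \<le> 1" for y
    unfolding h_def sum_cell_spread using row by (rule cell_spread_le_one)
  moreover have integral_h: "(\<integral>\<^sup>+ y. h y i \<partial>\<mu>) = ennreal (\<Sum>c\<in>S. B c i)" if "i < n" for i
  proof -
    have "B c i = 0" if "c \<in> S" "measure \<mu> (cell -` {c}) = 0" for c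
      using member_le_sum[of i "{..<n}" "B c", OF _ B_nonneg] row[OF that(1)] B_nonneg[of c i] that \<open>i < n\<close>
      by simp
    then have "(\<Sum>c\<in>S. if measure \<mu> (cell -` {c}) = 0 then 0 else B c i) = (\<Sum>c\<in>S. B c i)"
      by (intro sum.cong) auto
    then show ?thesis
      unfolding h_def nn_integral_cell_spread[OF finite B_nonneg] by simp
  qed
  moreover have "(\<integral>\<^sup>+ y. h y i \<partial>\<mu>) \<le> 1 / real n" if "i < n" for i
    using col[OF that] by (simp add: integral_h[OF that])
  moreover have "(\<Sum>i<n. \<integral>\<^sup>+ y. h y i \<partial>\<mu>) = ennreal (1 - \<epsilon>)"
    using B_nonneg mass by (simp add: integral_h sum_ennreal sum_nonneg sum.swap[of _ S])
  moreover have "(\<Sum>i<n. \<integral>\<^sup>+ y. ennreal (h y i * (dist y (x i))\<^sup>2) \<partial>\<mu>) \<le> ennreal (\<epsilon>\<^sup>2)"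
  proof -
    have "(\<Sum>i<n. \<integral>\<^sup>+ y. ennreal (h y i * (dist y (x i))\<^sup>2) \<partial>\<mu>) \<le> (\<Sum>i<n. ennreal (\<Sum>c\<in>S. w c i))"
      unfolding h_def using w_nonneg w by (intro sum_mono nn_integral_cell_spread_mult_le[OF finite]) auto
    also have "\<dots> = ennreal (\<Sum>c\<in>S. \<Sum>i<n. w c i)"
      using w_nonneg by (simp add: sum_ennreal sum_nonneg sum.swap[of _ S])
    finally show ?thesis
      using cost by (simp add: order_trans ennreal_leI)
  qed
  ultimately show ?thesis
    using \<open>0 \<le> \<epsilon>\<close> by (intro partial_W_le_of_kernel[OF sigma_finite_measure sets_\<mu>])
qed

text \<open>Scaling the coupling down to mass exactly \<open>1 - \<epsilon>\<close> keeps all constraints.\<close>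

lemma partial_W_le_of_cell_coupling:
  fixes \<mu> :: "'a::euclidean_space measure" and cell :: "'a \<Rightarrow> 'c" and B w :: "'c \<Rightarrow> nat \<Rightarrow> real"
  assumes "prob_space \<mu>" and "sets \<mu> = sets borel"
    and "cell \<in> measurable borel (count_space UNIV)" and "finite S"
    and B_nonneg: "\<And>c i. 0 \<le> B c i"
    and row: "\<And>c. c \<in> S \<Longrightarrow> (\<Sum>i<n. B c i) \<le> measure \<mu> (cell -` {c})"
    and col: "\<And>i. i < n \<Longrightarrow> (\<Sum>c\<in>S. B c i) \<le> 1 / real n"
    and mass: "1 - \<epsilon> \<le> (\<Sum>c\<in>S. \<Sum>i<n. B c i)"
    and w_nonneg: "\<And>c i. 0 \<le> w c i"
    and w: "\<And>c i y. c \<in> S \<Longrightarrow> i < n \<Longrightarrow> cell y = c \<Longrightarrow> B c i * (dist y (x i))\<^sup>2 \<le> w c i"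
    and cost: "(\<Sum>c\<in>S. \<Sum>i<n. w c i) \<le> \<epsilon>\<^sup>2"
    and "0 \<le> \<epsilon>" "\<epsilon> \<le> 1"
  shows "partial_W 2 (1 - \<epsilon>) \<mu> (empirical n x) \<le> ennreal \<epsilon>"
proof -
  define \<theta> where "\<theta> = (1 - \<epsilon>) / (\<Sum>c\<in>S. \<Sum>i<n. B c i)"
  have \<theta>: "0 \<le> \<theta>" "\<theta> \<le> 1" "\<theta> * (\<Sum>c\<in>S. \<Sum>i<n. B c i) = 1 - \<epsilon>"
    using mass \<open>0 \<le> \<epsilon>\<close> \<open>\<epsilon> \<le> 1\<close> unfolding \<theta>_def by (auto simp: divide_le_eq_1)
  show ?thesis
  proof (rule partial_W_le_of_exact_cell_coupling[where B = "\<lambda>c i. \<theta> * B c i" and w = "\<lambda>c i. \<theta> * w c i"])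
    show "(\<Sum>i<n. \<theta> * B c i) \<le> measure \<mu> (cell -` {c})" if "c \<in> S" for c
      using row[OF that] \<theta> B_nonneg
      by (simp add: sum_distrib_left[symmetric] mult_le_one order_trans[OF mult_left_le_one_le] sum_nonneg)
    show "(\<Sum>c\<in>S. \<theta> * B c i) \<le> 1 / real n" if "i < n" for i
      using col[OF that] \<theta> B_nonneg
      by (simp add: sum_distrib_left[symmetric] order_trans[OF mult_left_le_one_le] sum_nonneg)
    show "(\<Sum>c\<in>S. \<Sum>i<n. \<theta> * B c i) = 1 - \<epsilon>"
      using \<theta> by (simp add: sum_distrib_left[symmetric])
    show "\<theta> * B c i * (dist y (x i))\<^sup>2 \<le> \<theta> * w c i" if "c \<in> S" "i < n" "cell y = c" for c i y
      using mult_left_mono[OF w[OF that] \<open>0 \<le> \<theta>\<close>] by (simp add: mult.assoc)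
    show "(\<Sum>c\<in>S. \<Sum>i<n. \<theta> * w c i) \<le> \<epsilon>\<^sup>2"
      using cost \<theta> w_nonneg
      by (simp add: sum_distrib_left[symmetric] order_trans[OF mult_left_le_one_le] sum_nonneg)
  qed (use assms \<theta> in auto)
qed

section \<open>The dyadic grid in the plane\<close>

definition grid_cell :: "nat \<Rightarrow> real^2 \<Rightarrow> real^2 \<Rightarrow> int \<times> int" where
  "grid_cell J x0 y = (\<lfloor>2 ^ J * (y$1 - x0$1)\<rfloor>, \<lfloor>2 ^ J * (y$2 - x0$2)\<rfloor>)"

lemma measurable_grid_cell: "grid_cell J x0 \<in> measurable borel (count_space UNIV)"
proof (subst measurable_count_space_eq2_countable, safe)
  fix a :: "int \<times> int"
  have coordinate: "(\<lambda>y::real^2. \<lfloor>2 ^ J * (y$j - x0$j)\<rfloor>) \<in> measurable borel (count_space UNIV)" for j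
    by measurable
  have "(\<lambda>y::real^2. \<lfloor>2 ^ J * (y$j - x0$j)\<rfloor>) -` {b} \<in> sets borel" for j b
    using measurable_sets[OF coordinate, of "{b}"] by simp
  moreover have "grid_cell J x0 -` {a} =
      (\<lambda>y. \<lfloor>2 ^ J * (y$1 - x0$1)\<rfloor>) -` {fst a} \<inter> (\<lambda>y. \<lfloor>2 ^ J * (y$2 - x0$2)\<rfloor>) -` {snd a}"
    by (auto simp: grid_cell_def prod_eq_iff)
  ultimately show "grid_cell J x0 -` {a} \<inter> space borel \<in> sets borel"
    by auto
qed auto

lemma abs_diff_less_of_floor_div_eq:
  fixes t s :: real and m :: int
  assumes "0 < m" and "\<lfloor>t\<rfloor> div m = \<lfloor>s\<rfloor> div m"
  shows "\<bar>t - s\<bar> < m"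
proof -
  define q where "q = \<lfloor>t\<rfloor> div m"
  have div_bounds: "m * (a div m) \<le> a \<and> a < m * (a div m) + m" for a :: int
    using assms(1) div_mult_mod_eq[of a m] pos_mod_sign[of m a] pos_mod_bound[of m a]
    by (smt (verit) mult.commute)
  then have "m * q \<le> \<lfloor>t\<rfloor>" "\<lfloor>t\<rfloor> < m * q + m" "m * q \<le> \<lfloor>s\<rfloor>" "\<lfloor>s\<rfloor> < m * q + m"
    using div_bounds[of "\<lfloor>t\<rfloor>"] div_bounds[of "\<lfloor>s\<rfloor>"] unfolding q_def assms(2) by auto
  then have "real_of_int (m * q) \<le> t" "t < real_of_int (m * q + m)"
    "real_of_int (m * q) \<le> s" "s < real_of_int (m * q + m)"
    by linarith+
  then show ?thesis
    by simp
qed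

lemma dist_vec2_power2: "(dist (y::real^2) z)\<^sup>2 = (y$1 - z$1)\<^sup>2 + (y$2 - z$2)\<^sup>2"
  by (simp add: dist_vec_def L2_set_def sum_2 dist_real_def power2_abs)

lemma dist_le_of_dyadic_ancestor_grid_cell_eq:
  assumes "dyadic_ancestor k (grid_cell J x0 y) = dyadic_ancestor k (grid_cell J x0 z)"
  shows "(dist y z)\<^sup>2 \<le> 2 * (2 ^ k / 2 ^ J)\<^sup>2"
proof -
  have coordinate: "(y$j - z$j)\<^sup>2 \<le> (2 ^ k / 2 ^ J)\<^sup>2" if "j = 1 \<or> j = 2" for j
  proof -
    have "\<lfloor>2 ^ J * (y$j - x0$j)\<rfloor> div 2 ^ k = \<lfloor>2 ^ J * (z$j - x0$j)\<rfloor> div (2 ^ k :: int)"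
      using assms that by (auto simp: dyadic_ancestor_def grid_cell_def)
    from abs_diff_less_of_floor_div_eq[OF _ this]
    have "\<bar>2 ^ J * (y$j - x0$j) - 2 ^ J * (z$j - x0$j)\<bar> < 2 ^ k"
      by simp
    then have "2 ^ J * \<bar>y$j - z$j\<bar> < 2 ^ k"
      by (simp add: abs_mult flip: right_diff_distrib)
    then have "\<bar>y$j - z$j\<bar> \<le> 2 ^ k / 2 ^ J"
      by (simp add: field_simps)
    then show ?thesis
      by (metis abs_ge_zero power2_abs power_mono)
  qed
  show ?thesis
    using coordinate[of 1] coordinate[of 2] unfolding dist_vec2_power2 by simp
qed

lemma sum_measure_grid_cell:
  assumes "finite_measure \<mu>" and "sets \<mu> = sets borel" and "finite S"
  shows "(\<Sum>c\<in>S. measure \<mu> (grid_cell J x0 -` {c})) = measure \<mu> (grid_cell J x0 -` S)"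
proof -
  have "grid_cell J x0 -` {c} \<in> sets \<mu>" for c
    using measurable_sets[OF measurable_grid_cell, of "{c}"] assms(2) by simp
  then have "measure \<mu> (\<Union>c\<in>S. grid_cell J x0 -` {c}) = (\<Sum>c\<in>S. measure \<mu> (grid_cell J x0 -` {c}))"
    using assms(1,3) by (intro finite_measure.finite_measure_finite_Union) (auto simp: disjoint_family_on_def)
  moreover have "(\<Union>c\<in>S. grid_cell J x0 -` {c}) = grid_cell J x0 -` S"
    by auto
  ultimately show ?thesis
    by simp
qed

text \<open>Cells at level \<open>k\<close> of the dyadic hierarchy have diameter \<open>2^(k - J) \<surd>2\<close>, and after the
  first \<open>K\<close> levels at most \<open>discrepancy K\<close> of mass is left unmatched.\<close>

lemma partial_W_le_of_discrepancies:
  fixes \<mu> :: "(real^2) measure" and x :: "nat \<Rightarrow> real^2" and n :: nat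
  assumes "prob_space \<mu>" and sets_\<mu>: "sets \<mu> = sets borel" and "finite S"
    and full: "measure \<mu> (grid_cell J x0 -` S) = 1"
  defines "D \<equiv> hierarchical_matching.discrepancy S n (grid_cell J x0 \<circ> x)
      (\<lambda>c. measure \<mu> (grid_cell J x0 -` {c})) (\<lambda>_. 1 / real n)"
  assumes "D K \<le> \<epsilon>"
    and cost: "2 * (1 / 2 ^ J)\<^sup>2 + (\<Sum>j<K. 2 * (2 ^ Suc j / 2 ^ J)\<^sup>2 * D j) \<le> \<epsilon>\<^sup>2"
    and "0 \<le> \<epsilon>" "\<epsilon> \<le> 1"
  shows "partial_W 2 (1 - \<epsilon>) \<mu> (empirical n x) \<le> ennreal \<epsilon>"
proof -
  interpret prob_space \<mu> by fact
  define p where "p c = measure \<mu> (grid_cell J x0 -` {c})" for c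
  interpret hierarchical_matching S n "grid_cell J x0 \<circ> x" p "\<lambda>_. 1 / real n"
    by unfold_locales (simp_all add: \<open>finite S\<close> p_def)
  have D: "D = discrepancy"
    unfolding D_def p_def[abs_def] ..
  have total: "sum p S = 1"
    unfolding p_def sum_measure_grid_cell[OF finite_measure_axioms sets_\<mu> \<open>finite S\<close>] by (rule full)
  define W where "W k = 2 * (2 ^ k / 2 ^ J :: real)\<^sup>2" for k
  define w where "w c i = (\<Sum>k<Suc K. level_coupling k c i * W k)" for c i
  show ?thesis
  proof (rule partial_W_le_of_cell_coupling[OF \<open>prob_space \<mu>\<close> sets_\<mu> measurable_grid_cell \<open>finite S\<close>])
    show "0 \<le> coupling (Suc K) c i" "0 \<le> w c i" for c i
      unfolding w_def W_def by (simp_all add: coupling_nonneg sum_nonneg level_coupling_nonneg)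
    show "(\<Sum>i<n. coupling (Suc K) c i) \<le> measure \<mu> (grid_cell J x0 -` {c})" for c
      using residual_nonneg(1)[of "Suc K" c] by (simp add: coupling_row_sum p_def)
    show "(\<Sum>c\<in>S. coupling (Suc K) c i) \<le> 1 / real n" for i
      using residual_nonneg(2)[of "Suc K" i] by (simp add: coupling_col_sum)
    show "1 - \<epsilon> \<le> (\<Sum>c\<in>S. \<Sum>i<n. coupling (Suc K) c i)"
      using sum_residual_cells_le_discrepancy[of K] \<open>D K \<le> \<epsilon>\<close> unfolding coupling_mass total D by linarith
    show "coupling (Suc K) c i * (dist y (x i))\<^sup>2 \<le> w c i" if "grid_cell J x0 y = c" for c i y
      unfolding coupling_def w_def sum_distrib_right
    proof (intro sum_mono)
      fix k
      show "level_coupling k c i * (dist y (x i))\<^sup>2 \<le> level_coupling k c i * W k"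
      proof (cases "level_coupling k c i = 0")
        case False
        then show ?thesis
          using level_coupling_neq_zero[OF False] that level_coupling_nonneg[of k c i]
          by (auto simp: W_def intro!: mult_left_mono dist_le_of_dyadic_ancestor_grid_cell_eq)
      qed simp
    qed
    have "(\<Sum>c\<in>S. \<Sum>i<n. w c i) \<le> W 0 * sum p S + (\<Sum>j<K. W (Suc j) * discrepancy j)"
      unfolding w_def by (rule level_coupling_cost_le) (simp add: W_def)
    also have "\<dots> \<le> \<epsilon>\<^sup>2"
      using cost unfolding W_def total D by (simp add: mult.commute)
    finally show "(\<Sum>c\<in>S. \<Sum>i<n. w c i) \<le> \<epsilon>\<^sup>2" .
  qed (use \<open>0 \<le> \<epsilon>\<close> \<open>\<epsilon> \<le> 1\<close> in auto)
qed

lemma discrepancy_grid_cell_eq: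
  fixes \<mu> :: "(real^2) measure" and x :: "nat \<Rightarrow> real^2" and n :: nat
  assumes "prob_space \<mu>" and sets_\<mu>: "sets \<mu> = sets borel" and "finite S"
    and full: "measure \<mu> (grid_cell J x0 -` S) = 1"
  shows "hierarchical_matching.discrepancy S n (grid_cell J x0 \<circ> x)
      (\<lambda>c. measure \<mu> (grid_cell J x0 -` {c})) (\<lambda>_. 1 / real n) k =
    (\<Sum>a\<in>dyadic_ancestor k ` S. \<bar>measure \<mu> ((dyadic_ancestor k \<circ> grid_cell J x0) -` {a}) -
       card {i \<in> {..<n}. (dyadic_ancestor k \<circ> grid_cell J x0) (x i) = a} / n\<bar>)"
proof -
  interpret prob_space \<mu> by fact
  interpret hierarchical_matching S n "grid_cell J x0 \<circ> x" "\<lambda>c. measure \<mu> (grid_cell J x0 -` {c})" "\<lambda>_. 1 / real n"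
    by unfold_locales (simp_all add: \<open>finite S\<close>)
  have grid_sets: "grid_cell J x0 -` C \<in> sets \<mu>" for C
    using measurable_sets[OF measurable_grid_cell, of C] sets_\<mu> by simp
  have "cell_mass k (\<lambda>c. measure \<mu> (grid_cell J x0 -` {c})) a =
      measure \<mu> ((dyadic_ancestor k \<circ> grid_cell J x0) -` {a})" for a
  proof -
    have "AE y in \<mu>. grid_cell J x0 y \<in> S"
      using AE_prob_1[OF full] by simp
    then have "measure \<mu> ((dyadic_ancestor k \<circ> grid_cell J x0) -` {a}) =
        measure \<mu> (grid_cell J x0 -` {c \<in> S. dyadic_ancestor k c = a})"
      unfolding vimage_comp[symmetric]
      by (intro measure_eq_AE grid_sets) auto
    then show ?thesis
      unfolding cell_mass_def
      using sum_measure_grid_cell[OF finite_measure_axioms sets_\<mu>, of "{c \<in> S. dyadic_ancestor k c = a}"] \<open>finite S\<close>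
      by simp
  qed
  moreover have "sample_mass k (\<lambda>_. 1 / real n) a =
      card {i \<in> {..<n}. (dyadic_ancestor k \<circ> grid_cell J x0) (x i) = a} / n" for a
    by (simp add: sample_mass_def)
  ultimately show ?thesis
    by (simp add: discrepancy_def)
qed

section \<open>Concentration of empirical frequencies\<close>

lemma indep_vars_PiM_components:
  fixes M :: "'i \<Rightarrow> 'a measure"
  assumes "finite I" and "I \<noteq> {}" and "\<And>i. i \<in> I \<Longrightarrow> prob_space (M i)"
  shows "prob_space.indep_vars (PiM I M) M (\<lambda>i x. x i) I"
proof -
  interpret P: prob_space "PiM I M"
    using assms by (intro prob_space_PiM) auto
  have "distr (PiM I M) (PiM I M) (\<lambda>x. \<lambda>i\<in>I. x i) = PiM I M"
    by (subst distr_cong[where g = "\<lambda>x. x", OF refl refl]) (auto simp: space_PiM PiE_def extensional_def)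
  also have "\<dots> = PiM I (\<lambda>i. distr (PiM I M) (M i) (\<lambda>x. x i))"
    using assms by (intro PiM_cong refl) (simp add: distr_PiM_component)
  finally show ?thesis
    using assms by (subst P.indep_vars_iff_distr_eq_PiM') auto
qed

lemma Hoeffding_PiM:
  fixes \<mu> :: "'a measure" and f :: "'a \<Rightarrow> real" and n :: nat and t :: real
  assumes "prob_space \<mu>" and "0 < n" and f: "f \<in> borel_measurable \<mu>"
    and f_bounded: "\<And>y. \<bar>f y\<bar> \<le> 1" and "0 \<le> t"
  shows "measure (PiM {..<n} (\<lambda>_. \<mu>)) {x \<in> space (PiM {..<n} (\<lambda>_. \<mu>)).
           n * (\<integral>y. f y \<partial>\<mu>) + n * t \<le> (\<Sum>i<n. f (x i))} \<le> exp (- (n * t\<^sup>2 / 2))"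
proof -
  let ?M = "PiM {..<n} (\<lambda>_. \<mu>)"
  interpret M: prob_space ?M
    using assms(1) by (intro prob_space_PiM) auto
  have "M.indep_vars (\<lambda>_. \<mu>) (\<lambda>i x. x i) {..<n}"
    using indep_vars_PiM_components[of "{..<n}" "\<lambda>_. \<mu>"] assms(1,2) by auto
  then have "M.indep_vars (\<lambda>_. borel) (\<lambda>i x. f (x i)) {..<n}"
    by (rule M.indep_vars_compose2) (use f in simp)
  then interpret Hoeffding_ineq ?M "{..<n}" "\<lambda>i x. f (x i)" "\<lambda>_. -1" "\<lambda>_. 1"
      "\<Sum>i<n. M.expectation (\<lambda>x. f (x i))"
    using f_bounded by unfold_locales (auto simp: abs_le_iff)
  have "M.expectation (\<lambda>x. f (x i)) = (\<integral>y. f y \<partial>\<mu>)" if "i < n" for i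
  proof -
    have "M.expectation (\<lambda>x. f (x i)) = integral\<^sup>L (distr ?M \<mu> (\<lambda>x. x i)) f"
      using that f by (intro integral_distr[symmetric]) auto
    also have "distr ?M \<mu> (\<lambda>x. x i) = \<mu>"
      using assms(1) that by (intro distr_PiM_component) auto
    finally show ?thesis .
  qed
  then have mean: "(\<Sum>i<n. M.expectation (\<lambda>x. f (x i))) = n * (\<integral>y. f y \<partial>\<mu>)"
    by simp
  have exponent: "-2 * (n * t)\<^sup>2 / (\<Sum>i<n. (1 - -1 :: real)\<^sup>2) = - (n * t\<^sup>2 / 2)"
    using \<open>0 < n\<close> by (simp add: power2_eq_square)
  have "M.prob {x \<in> space ?M. (\<Sum>i<n. M.expectation (\<lambda>x. f (x i))) + n * t \<le> (\<Sum>i<n. f (x i))}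
      \<le> exp (-2 * (n * t)\<^sup>2 / (\<Sum>i<n. (1 - -1 :: real)\<^sup>2))"
    using \<open>0 < n\<close> \<open>0 \<le> t\<close> by (intro Hoeffding_ineq_ge) auto
  then show ?thesis
    unfolding mean exponent .
qed

lemma measure_compl_INT_le:
  fixes \<delta> :: real
  assumes "finite K" and "\<And>k. k \<in> K \<Longrightarrow> E k \<in> sets M"
    and "\<And>k. k \<in> K \<Longrightarrow> measure M (space M - E k) \<le> \<delta>"
  shows "measure M (space M - (\<Inter>k\<in>K. E k)) \<le> card K * \<delta>"
proof -
  have "measure M (space M - (\<Inter>k\<in>K. E k)) = measure M (\<Union>k\<in>K. space M - E k)"
    by (rule arg_cong[where f = "measure M"]) auto
  also have "\<dots> \<le> (\<Sum>k\<in>K. measure M (space M - E k))"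
    using assms(1,2) by (intro measure_UNION_le) auto
  also have "\<dots> \<le> card K * \<delta>"
    using sum_mono[of K _ "\<lambda>_. \<delta>"] assms(3) by simp
  finally show ?thesis .
qed

lemma Hoeffding_PiM_family:
  fixes \<mu> :: "'a measure" and f :: "'i \<Rightarrow> 'a \<Rightarrow> real" and n :: nat and t :: real
  assumes "prob_space \<mu>" and "0 < n" and "0 \<le> t" and "finite I"
    and f: "\<And>\<sigma>. \<sigma> \<in> I \<Longrightarrow> f \<sigma> \<in> borel_measurable \<mu>"
    and f_bounded: "\<And>\<sigma> y. \<sigma> \<in> I \<Longrightarrow> \<bar>f \<sigma> y\<bar> \<le> 1"
  shows "\<exists>E \<in> sets (PiM {..<n} (\<lambda>_. \<mu>)).
    (\<forall>x\<in>E. \<forall>\<sigma>\<in>I. (\<Sum>i<n. f \<sigma> (x i)) < n * (\<integral>y. f \<sigma> y \<partial>\<mu>) + n * t) \<and>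
    measure (PiM {..<n} (\<lambda>_. \<mu>)) (space (PiM {..<n} (\<lambda>_. \<mu>)) - E) \<le> card I * exp (- (n * t\<^sup>2 / 2))"
proof -
  let ?M = "PiM {..<n} (\<lambda>_. \<mu>)"
  define E where "E \<sigma> = {x \<in> space ?M. (\<Sum>i<n. f \<sigma> (x i)) < n * (\<integral>y. f \<sigma> y \<partial>\<mu>) + n * t}" for \<sigma>
  have E_sets: "E \<sigma> \<in> sets ?M" if "\<sigma> \<in> I" for \<sigma>
  proof -
    have "(\<lambda>x. \<Sum>i<n. f \<sigma> (x i)) \<in> borel_measurable ?M"
      using f[OF that] by (intro borel_measurable_sum) (simp add: measurable_compose[OF measurable_component_singleton])
    then show ?thesis
      unfolding E_def by measurable
  qed
  have "measure ?M (space ?M - E \<sigma>) \<le> exp (- (n * t\<^sup>2 / 2))" if "\<sigma> \<in> I" for \<sigma>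
  proof -
    have "space ?M - E \<sigma> = {x \<in> space ?M. n * (\<integral>y. f \<sigma> y \<partial>\<mu>) + n * t \<le> (\<Sum>i<n. f \<sigma> (x i))}"
      unfolding E_def by auto
    then show ?thesis
      using Hoeffding_PiM[OF \<open>prob_space \<mu>\<close> \<open>0 < n\<close> f[OF that] f_bounded[OF that] \<open>0 \<le> t\<close>] by simp
  qed
  then have "measure ?M (space ?M - (\<Inter>\<sigma>\<in>I. E \<sigma>)) \<le> card I * exp (- (n * t\<^sup>2 / 2))"
    using \<open>finite I\<close> E_sets by (intro measure_compl_INT_le)
  moreover have "space ?M - (\<Inter>\<sigma>\<in>I. E \<sigma>) = space ?M - space ?M \<inter> (\<Inter>\<sigma>\<in>I. E \<sigma>)"
    by blast
  moreover have "space ?M \<inter> (\<Inter>\<sigma>\<in>I. E \<sigma>) \<in> sets ?M"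
    using \<open>finite I\<close> E_sets by (cases "I = {}") (auto intro!: sets.Int sets.finite_INT)
  ultimately show ?thesis
    by (intro bexI[of _ "space ?M \<inter> (\<Inter>\<sigma>\<in>I. E \<sigma>)"]) (auto simp: E_def)
qed

lemma integral_piecewise_constant:
  fixes g :: "'a \<Rightarrow> 'b" and \<sigma> :: "'b \<Rightarrow> real"
  assumes "finite_measure \<mu>" and g: "g \<in> measurable \<mu> (count_space UNIV)" and "finite A"
  shows "(\<integral>y. (if g y \<in> A then \<sigma> (g y) else 0) \<partial>\<mu>) = (\<Sum>a\<in>A. \<sigma> a * measure \<mu> (g -` {a} \<inter> space \<mu>))"
proof -
  interpret finite_measure \<mu> by fact
  have "(\<integral>y. (if g y \<in> A then \<sigma> (g y) else 0) \<partial>\<mu>) = (\<integral>y. (\<Sum>a\<in>A. \<sigma> a * indicator (g -` {a} \<inter> space \<mu>) y) \<partial>\<mu>)"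
    using \<open>finite A\<close> by (intro Bochner_Integration.integral_cong) (auto simp: indicator_def)
  also have "\<dots> = (\<Sum>a\<in>A. \<sigma> a * measure \<mu> (g -` {a} \<inter> space \<mu>))"
    using measurable_sets[OF g]
    by (subst Bochner_Integration.integral_sum)
      (auto simp: emeasure_eq_measure less_top[symmetric] intro!: integrable_mult_right integrable_real_indicator)
  finally show ?thesis .
qed

lemma sum_abs_eq_signed_sum:
  assumes "finite A"
  obtains \<sigma> where "\<sigma> \<in> A \<rightarrow>\<^sub>E {-1, 1}" and "(\<Sum>a\<in>A. \<bar>u a\<bar>) = (\<Sum>a\<in>A. \<sigma> a * u a :: real)"
proof
  show "restrict (\<lambda>a. if 0 \<le> u a then 1 else -1) A \<in> A \<rightarrow>\<^sub>E {-1, 1}"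
    by auto
  show "(\<Sum>a\<in>A. \<bar>u a\<bar>) = (\<Sum>a\<in>A. restrict (\<lambda>a. if 0 \<le> u a then 1 else -1) A a * u a)"
    by (intro sum.cong) auto
qed

text \<open>The \<open>L\<^sup>1\<close> deviation of the empirical frequencies of a finite partition is the maximum, over
  the \<open>2 ^ card A\<close> sign patterns \<open>\<sigma>\<close>, of a centred empirical mean of a \<open>[-1, 1]\<close>-valued function,
  to each of which Hoeffding's inequality applies.\<close>

lemma empirical_frequencies_L1_deviation:
  fixes \<mu> :: "'a measure" and g :: "'a \<Rightarrow> 'b" and n :: nat and t :: real
  assumes "prob_space \<mu>" and g: "g \<in> measurable \<mu> (count_space UNIV)" and "finite A"
    and "0 < n" and "0 \<le> t"
  shows "\<exists>E \<in> sets (PiM {..<n} (\<lambda>_. \<mu>)).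
    (\<forall>x\<in>E. (\<Sum>a\<in>A. \<bar>measure \<mu> (g -` {a} \<inter> space \<mu>) - card {i \<in> {..<n}. g (x i) = a} / n\<bar>) \<le> t) \<and>
    measure (PiM {..<n} (\<lambda>_. \<mu>)) (space (PiM {..<n} (\<lambda>_. \<mu>)) - E) \<le> 2 ^ card A * exp (- (n * t\<^sup>2 / 2))"
proof -
  interpret prob_space \<mu> by fact
  let ?M = "PiM {..<n} (\<lambda>_. \<mu>)"
  let ?p = "\<lambda>a. measure \<mu> (g -` {a} \<inter> space \<mu>)" and ?q = "\<lambda>x a. card {i \<in> {..<n}. g (x i) = a}"
  define signs where "signs = A \<rightarrow>\<^sub>E {-1, 1::real}"
  define f where "f \<sigma> y = (if g y \<in> A then \<sigma> (g y) else 0)" for \<sigma> :: "'b \<Rightarrow> real" and y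
  have f_measurable: "f \<sigma> \<in> borel_measurable \<mu>" for \<sigma>
    unfolding f_def by (rule measurable_compose[OF g borel_measurable_count_space])
  have integral_f: "(\<integral>y. f \<sigma> y \<partial>\<mu>) = (\<Sum>a\<in>A. \<sigma> a * ?p a)" for \<sigma>
    unfolding f_def using finite_measure_axioms g \<open>finite A\<close> by (rule integral_piecewise_constant)
  have empirical_f: "(\<Sum>i<n. f \<sigma> (x i)) = (\<Sum>a\<in>A. \<sigma> a * ?q x a)" for \<sigma> x
  proof -
    have "(\<Sum>i<n. f \<sigma> (x i)) = (\<Sum>i<n. \<Sum>a\<in>A. if g (x i) = a then \<sigma> a else 0)"
      using \<open>finite A\<close> by (intro sum.cong) (auto simp: f_def)
    also have "\<dots> = (\<Sum>a\<in>A. \<sigma> a * ?q x a)"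
      by (subst sum.swap) (simp add: sum.If_cases Int_def mult.commute)
    finally show ?thesis .
  qed
  have "finite signs"
    unfolding signs_def using \<open>finite A\<close> by (intro finite_PiE) auto
  have "\<bar>f \<sigma> y\<bar> \<le> 1" if "\<sigma> \<in> signs" for \<sigma> y
    using that by (auto simp: f_def signs_def PiE_iff)
  with \<open>finite signs\<close> have "\<exists>E \<in> sets ?M. (\<forall>x\<in>E. \<forall>\<sigma>\<in>signs. (\<Sum>i<n. f \<sigma> (x i)) < n * (\<integral>y. f \<sigma> y \<partial>\<mu>) + n * t) \<and>
      measure ?M (space ?M - E) \<le> card signs * exp (- (n * t\<^sup>2 / 2))"
    by (intro Hoeffding_PiM_family \<open>prob_space \<mu>\<close> \<open>0 < n\<close> \<open>0 \<le> t\<close> f_measurable)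
  then obtain E where "E \<in> sets ?M"
    and E: "\<forall>x\<in>E. \<forall>\<sigma>\<in>signs. (\<Sum>i<n. f \<sigma> (x i)) < n * (\<integral>y. f \<sigma> y \<partial>\<mu>) + n * t"
    and "measure ?M (space ?M - E) \<le> card signs * exp (- (n * t\<^sup>2 / 2))"
    by blast
  moreover have "card signs = 2 ^ card A"
    using \<open>finite A\<close> by (simp add: signs_def card_PiE numeral_2_eq_2)
  moreover have "(\<Sum>a\<in>A. \<bar>?p a - ?q x a / n\<bar>) \<le> t" if "x \<in> E" for x
  proof -
    obtain \<sigma> where "\<sigma> \<in> A \<rightarrow>\<^sub>E {-1, 1}"
      and \<sigma>: "(\<Sum>a\<in>A. \<bar>?q x a / n - ?p a\<bar>) = (\<Sum>a\<in>A. \<sigma> a * (?q x a / n - ?p a))"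
      by (rule sum_abs_eq_signed_sum[OF \<open>finite A\<close>])
    then have less: "(\<Sum>i<n. f \<sigma> (x i)) < n * (\<integral>y. f \<sigma> y \<partial>\<mu>) + n * t"
      using E that unfolding signs_def by blast
    have "n * (\<Sum>a\<in>A. \<bar>?p a - ?q x a / n\<bar>) = n * (\<Sum>a\<in>A. \<sigma> a * (?q x a / n - ?p a))"
      using \<sigma> by (simp add: abs_minus_commute)
    also have "\<dots> = (\<Sum>a\<in>A. \<sigma> a * ?q x a - n * (\<sigma> a * ?p a))"
      unfolding sum_distrib_left using \<open>0 < n\<close> by (intro sum.cong refl) (simp add: field_simps)
    also have "\<dots> < n * t"
      using less unfolding integral_f empirical_f sum_subtractf sum_distrib_left[symmetric] by linarith
    finally show ?thesis
      using \<open>0 < n\<close> by simp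
  qed
  ultimately show ?thesis
    by auto
qed

section \<open>Choice of the resolution\<close>

lemma nat_floor_log_bounds:
  fixes n :: real
  assumes "1 \<le> n"
  defines "L \<equiv> nat \<lfloor>log 64 n\<rfloor>"
  shows "(2::real) ^ (6 * L) \<le> n" and "n < 64 * 2 ^ (6 * L)"
proof -
  have L: "real L = of_int \<lfloor>log 64 n\<rfloor>"
    using assms by (simp add: L_def)
  have power: "(2::real) ^ (6 * L) = 64 powr real L"
    by (simp add: power_mult powr_realpow)
  have "64 powr real L \<le> 64 powr log 64 n"
    using L by (intro powr_mono) auto
  then show "(2::real) ^ (6 * L) \<le> n"
    using assms power by simp
  have "n = 64 powr log 64 n"
    using assms by simp
  also have "\<dots> < 64 powr (real L + 1)"
    using L by (intro powr_less_mono) linarith+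
  finally show "n < 64 * 2 ^ (6 * L)"
    using power by (simp add: powr_add)
qed

text \<open>The Hoeffding threshold \<open>t\<close> for a partition into \<open>c\<close> parts is chosen such that the union bound
  over the \<open>2 ^ c\<close> sign patterns gives failure probability exactly \<open>1 / n\<^sup>2\<close>.\<close>

lemma deviation_threshold:
  fixes n c :: nat and q t :: real
  assumes "3 \<le> n" and c: "real c \<le> 9 * q\<^sup>2" and "1 \<le> q"
  defines "t \<equiv> sqrt (2 * (c * ln 2 + 2 * ln n) / n)"
  shows "t \<le> 7 * q * sqrt (ln n / n)" and "2 ^ c * exp (- (n * t\<^sup>2 / 2)) = 1 / (real n)\<^sup>2"
proof -
  have "1 \<le> ln n"
    using \<open>3 \<le> n\<close> exp_le by (subst ln_ge_iff) auto
  have "1 \<le> q\<^sup>2"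
    using \<open>1 \<le> q\<close> by (simp add: one_le_power)
  have "c * ln 2 \<le> 9 * q\<^sup>2 * 1"
    using c ln_2_less_1 by (intro mult_mono) auto
  also have "\<dots> \<le> 9 * q\<^sup>2 * ln n"
    using \<open>1 \<le> ln n\<close> \<open>1 \<le> q\<^sup>2\<close> by (intro mult_left_mono) auto
  finally have "c * ln 2 \<le> 9 * (q\<^sup>2 * ln n)"
    by (simp only: mult.assoc)
  moreover have "ln n \<le> q\<^sup>2 * ln n"
    using mult_right_mono[OF \<open>1 \<le> q\<^sup>2\<close>, of "ln n"] \<open>1 \<le> ln n\<close> by simp
  ultimately have "2 * (c * ln 2 + 2 * ln n) \<le> 49 * (q\<^sup>2 * ln n)"
    using \<open>1 \<le> ln n\<close> by (smt (verit))
  then have "2 * (c * ln 2 + 2 * ln n) / n \<le> (7 * q)\<^sup>2 * (ln n / n)"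
    using \<open>3 \<le> n\<close> by (simp add: power_mult_distrib divide_right_mono)
  then have "t \<le> sqrt ((7 * q)\<^sup>2 * (ln n / n))"
    unfolding t_def by (rule real_sqrt_le_mono)
  also have "sqrt ((7 * q)\<^sup>2 * (ln n / n)) = 7 * q * sqrt (ln n / n)"
    unfolding real_sqrt_mult real_sqrt_abs using \<open>1 \<le> q\<close> by simp
  finally show "t \<le> 7 * q * sqrt (ln n / n)" .
  have "n * t\<^sup>2 / 2 = c * ln 2 + 2 * ln n"
    using \<open>3 \<le> n\<close> \<open>1 \<le> ln n\<close> by (simp add: t_def)
  moreover have "exp (c * ln 2 + 2 * ln n) = 2 ^ c * (real n)\<^sup>2"
    using exp_of_nat_mult[of c "ln (2::real)"] exp_of_nat_mult[of 2 "ln n"] \<open>3 \<le> n\<close> by (simp add: exp_add)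
  ultimately show "2 ^ c * exp (- (n * t\<^sup>2 / 2)) = 1 / (real n)\<^sup>2"
    using \<open>3 \<le> n\<close> by (simp only: exp_minus) (simp add: field_simps)
qed

lemma sum_level_costs_le:
  fixes D :: "nat \<Rightarrow> real"
  assumes D: "\<And>j. j < K \<Longrightarrow> D j \<le> 7 * (2 ^ J / 2 ^ j) * \<delta>" and "0 \<le> \<delta>"
  shows "(\<Sum>j<K. 2 * (2 ^ Suc j / 2 ^ J)\<^sup>2 * D j) \<le> 56 * (2 ^ K / 2 ^ J) * \<delta>"
proof -
  have "(\<Sum>j<K. 2 * (2 ^ Suc j / 2 ^ J)\<^sup>2 * D j) \<le> (\<Sum>j<K. 2 * (2 ^ Suc j / 2 ^ J)\<^sup>2 * (7 * (2 ^ J / 2 ^ j) * \<delta>))"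
    by (intro sum_mono mult_left_mono D) auto
  also have "\<dots> = (\<Sum>j<K. 56 * \<delta> / 2 ^ J * 2 ^ j)"
    by (intro sum.cong refl) (simp add: power2_eq_square field_simps)
  also have "\<dots> = 56 * \<delta> / 2 ^ J * (\<Sum>j<K. 2 ^ j)"
    by (rule sum_distrib_left[symmetric])
  also have "(\<Sum>j<K. (2::real) ^ j) = 2 ^ K - 1"
    by (induction K) simp_all
  finally show ?thesis
    using \<open>0 \<le> \<delta>\<close> by (simp add: field_simps)
qed

lemma dyadic_scale_bounds:
  fixes n :: nat and v :: real
  assumes "3 \<le> n" and "1 \<le> v" and "v ^ 6 \<le> n" and "n < 64 * v ^ 6"
  shows "sqrt (ln n / n) \<le> ln n / v ^ 3" and "8 * ln n / v\<^sup>2 \<le> 32 * real n powr (-1/3) * ln n"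
proof -
  have "1 \<le> ln n"
    using \<open>3 \<le> n\<close> exp_le by (subst ln_ge_iff) auto
  have "(v ^ 3)\<^sup>2 \<le> n"
    using assms(3) by (simp flip: power_mult)
  then have "v ^ 3 \<le> sqrt n"
    by (rule real_le_rsqrt)
  moreover have "sqrt (ln n) \<le> sqrt ((ln n)\<^sup>2)"
    using \<open>1 \<le> ln n\<close> by (intro real_sqrt_le_mono) (simp add: power2_eq_square)
  ultimately show "sqrt (ln n / n) \<le> ln n / v ^ 3"
    unfolding real_sqrt_divide using \<open>1 \<le> ln n\<close> \<open>1 \<le> v\<close>
    by (intro frac_le) auto
  have "real n powr (1/3) < ((4 * v\<^sup>2) ^ 3) powr (1/3)"
    using assms(1,4) by (intro powr_less_mono2) (simp_all add: power_mult_distrib flip: power_mult)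
  also have "((4 * v\<^sup>2) ^ 3) powr (1/3) = 4 * v\<^sup>2"
  proof -
    have pos: "0 < 4 * v\<^sup>2"
      using \<open>1 \<le> v\<close> by simp
    have "((4 * v\<^sup>2) ^ 3) powr (1/3) = ((4 * v\<^sup>2) powr real 3) powr (1/3)"
      using powr_realpow[OF pos, of 3] by simp
    also have "\<dots> = (4 * v\<^sup>2) powr (real 3 * (1/3))"
      by (rule powr_powr)
    finally show ?thesis
      using pos by simp
  qed
  finally have "32 * ln n / (4 * v\<^sup>2) \<le> 32 * ln n / real n powr (1/3)"
    using \<open>1 \<le> ln n\<close> \<open>3 \<le> n\<close> \<open>1 \<le> v\<close> by (intro divide_left_mono) (auto intro!: mult_pos_pos)
  moreover have "real n powr (-1/3) = 1 / real n powr (1/3)"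
    by (simp add: powr_minus_divide[symmetric])
  ultimately show "8 * ln n / v\<^sup>2 \<le> 32 * real n powr (-1/3) * ln n"
    by simp
qed

lemma hierarchical_budget:
  fixes v l \<delta> \<epsilon> :: real
  assumes v: "1 \<le> v" and l: "1 \<le> l" and "0 \<le> \<delta>" and \<delta>: "\<delta> \<le> l / v ^ 3" and \<epsilon>: "8 * l / v\<^sup>2 \<le> \<epsilon>"
  shows "7 * v * \<delta> \<le> \<epsilon>" and "2 / v ^ 4 + 56 * \<delta> / v \<le> \<epsilon>\<^sup>2"
proof -
  have "0 < v"
    using v by simp
  have "7 * v * \<delta> \<le> 7 * v * (l / v ^ 3)"
    using \<delta> \<open>0 < v\<close> by (intro mult_left_mono) auto
  also have "\<dots> = 7 * l / v\<^sup>2"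
    using \<open>0 < v\<close> by (simp add: field_simps power_eq_if)
  also have "\<dots> \<le> 8 * l / v\<^sup>2"
    using l \<open>0 < v\<close> by (intro divide_right_mono) auto
  finally show "7 * v * \<delta> \<le> \<epsilon>"
    using \<epsilon> by linarith
  have "56 * \<delta> / v \<le> 56 * (l / v ^ 3) / v"
    using \<delta> \<open>0 < v\<close> by (intro divide_right_mono mult_left_mono) auto
  also have "\<dots> = 56 * l / v ^ 4"
    using \<open>0 < v\<close> by (simp add: field_simps power_eq_if)
  finally have "2 / v ^ 4 + 56 * \<delta> / v \<le> (2 + 56 * l) / v ^ 4"
    by (simp add: add_divide_distrib)
  also have "\<dots> \<le> 64 * l\<^sup>2 / v ^ 4"
  proof (intro divide_right_mono)
    show "2 + 56 * l \<le> 64 * l\<^sup>2"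
      using l mult_left_mono[OF l, of l] unfolding power2_eq_square by linarith
  qed (use \<open>0 < v\<close> in simp)
  also have "\<dots> = (8 * l / v\<^sup>2)\<^sup>2"
    by (simp add: power2_eq_square field_simps power_eq_if)
  also have "\<dots> \<le> \<epsilon>\<^sup>2"
    using \<epsilon> l \<open>0 < v\<close> by (intro power_mono) auto
  finally show "2 / v ^ 4 + 56 * \<delta> / v \<le> \<epsilon>\<^sup>2" .
qed

text \<open>At resolution \<open>2^(-2L)\<close> with \<open>64^L \<approx> n\<close>, level-\<open>k\<close> discrepancies of order
  \<open>2^(2L - k) (ln n / n)^(1/2)\<close> leave mass \<open>O(n^(-1/3) ln n)\<close> unmatched after \<open>L\<close> levels and
  cost \<open>O(n^(-2/3) (ln n)\<^sup>2)\<close>.\<close>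

lemma RPW_le_of_level_discrepancies:
  fixes \<mu> :: "(real^2) measure" and x :: "nat \<Rightarrow> real^2" and n L :: nat
  assumes "prob_space \<mu>" and "sets \<mu> = sets borel"
    and full: "measure \<mu> (grid_cell (2 * L) x0 -` dyadic_box (2 * L)) = 1"
    and "3 \<le> n" and L: "(2::real) ^ (6 * L) \<le> n" "real n < 64 * 2 ^ (6 * L)"
  defines "D \<equiv> hierarchical_matching.discrepancy (dyadic_box (2 * L)) n (grid_cell (2 * L) x0 \<circ> x)
      (\<lambda>c. measure \<mu> (grid_cell (2 * L) x0 -` {c})) (\<lambda>_. 1 / real n)"
  assumes D: "\<And>k. k \<le> L \<Longrightarrow> D k \<le> 7 * (2 ^ (2 * L) / 2 ^ k) * sqrt (ln n / n)"
  shows "RPW 2 1 \<mu> (empirical n x) \<le> 32 * real n powr (-1/3) * ln n"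
proof -
  define v where "v = (2::real) ^ L"
  define \<delta> where "\<delta> = sqrt (ln n / n)"
  define \<epsilon> where "\<epsilon> = 32 * real n powr (-1/3) * ln n"
  have "1 \<le> v"
    by (simp add: v_def)
  have "1 \<le> ln n"
    using \<open>3 \<le> n\<close> exp_le by (subst ln_ge_iff) auto
  have "v ^ 6 \<le> n" "n < 64 * v ^ 6"
    using L by (simp_all add: v_def mult.commute flip: power_mult)
  note scale = dyadic_scale_bounds[OF \<open>3 \<le> n\<close> \<open>1 \<le> v\<close> this, folded \<delta>_def \<epsilon>_def]
  have "0 \<le> \<delta>" "0 \<le> \<epsilon>"
    unfolding \<delta>_def \<epsilon>_def using \<open>1 \<le> ln n\<close> by simp_all
  note budget = hierarchical_budget[OF \<open>1 \<le> v\<close> \<open>1 \<le> ln n\<close> \<open>0 \<le> \<delta>\<close> scale]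
  show ?thesis
  proof (cases "1 \<le> \<epsilon>")
    case True
    then show ?thesis
      using RPW_le_1 order_trans unfolding \<epsilon>_def by blast
  next
    case False
    have "D L \<le> \<epsilon>"
      using D[of L] budget(1) by (simp add: v_def \<delta>_def power_add mult_2)
    have "D j \<le> 7 * (2 ^ (2 * L) / 2 ^ j) * \<delta>" if "j < L" for j
      using D[of j] that unfolding \<delta>_def by simp
    then have "(\<Sum>j<L. 2 * (2 ^ Suc j / 2 ^ (2 * L))\<^sup>2 * D j) \<le> 56 * (2 ^ L / 2 ^ (2 * L)) * \<delta>"
      using \<open>0 \<le> \<delta>\<close> by (rule sum_level_costs_le)
    also have "56 * (2 ^ L / 2 ^ (2 * L)) * \<delta> = 56 * \<delta> / v"
      by (simp add: v_def power_add mult_2)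
    moreover have "2 * (1 / 2 ^ (2 * L))\<^sup>2 = 2 / v ^ 4"
      by (simp add: v_def power_mult_distrib power_divide flip: power_mult)
    ultimately have cost: "2 * (1 / 2 ^ (2 * L))\<^sup>2 + (\<Sum>j<L. 2 * (2 ^ Suc j / 2 ^ (2 * L))\<^sup>2 * D j) \<le> \<epsilon>\<^sup>2"
      using budget(2) by linarith
    have "\<epsilon> \<le> 1"
      using False by simp
    have "partial_W 2 (1 - \<epsilon>) \<mu> (empirical n x) \<le> ennreal \<epsilon>"
      by (rule partial_W_le_of_discrepancies[OF \<open>prob_space \<mu>\<close> \<open>sets \<mu> = sets borel\<close> finite_dyadic_box full
            \<open>D L \<le> \<epsilon>\<close>[unfolded D_def] cost[unfolded D_def] \<open>0 \<le> \<epsilon>\<close> \<open>\<epsilon> \<le> 1\<close>])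
    then show ?thesis
      using RPW_le[OF \<open>0 \<le> \<epsilon>\<close>] False unfolding \<epsilon>_def by simp
  qed
qed

lemma level_discrepancy_event:
  fixes \<mu> :: "(real^2) measure" and n J k :: nat
  assumes "prob_space \<mu>" and sets_\<mu>: "sets \<mu> = sets borel"
    and full: "measure \<mu> (grid_cell J x0 -` dyadic_box J) = 1" and "3 \<le> n" and "k \<le> J"
  shows "\<exists>E \<in> sets (PiM {..<n} (\<lambda>_. \<mu>)).
    (\<forall>x\<in>E. hierarchical_matching.discrepancy (dyadic_box J) n (grid_cell J x0 \<circ> x)
        (\<lambda>c. measure \<mu> (grid_cell J x0 -` {c})) (\<lambda>_. 1 / real n) k \<le> 7 * (2 ^ J / 2 ^ k) * sqrt (ln n / n)) \<and>
    measure (PiM {..<n} (\<lambda>_. \<mu>)) (space (PiM {..<n} (\<lambda>_. \<mu>)) - E) \<le> 1 / (real n)\<^sup>2"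
proof -
  let ?g = "dyadic_ancestor k \<circ> grid_cell J x0" and ?A = "dyadic_ancestor k ` dyadic_box J"
  define t where "t = sqrt (2 * (card ?A * ln 2 + 2 * ln n) / n)"
  have "1 \<le> (2::real) ^ J / 2 ^ k"
    using \<open>k \<le> J\<close> by (simp add: power_increasing)
  note threshold = deviation_threshold[OF \<open>3 \<le> n\<close> card_dyadic_ancestor_image_le[OF \<open>k \<le> J\<close>] this, folded t_def]
  have "(\<lambda>y. dyadic_ancestor k (grid_cell J x0 y)) \<in> measurable borel (count_space UNIV)"
    by (rule measurable_compose[OF measurable_grid_cell]) simp
  then have g: "?g \<in> measurable \<mu> (count_space UNIV)"
    by (simp add: measurable_cong_sets[OF sets_\<mu> refl] comp_def)
  have "0 < n" "0 \<le> t"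
    unfolding t_def using \<open>3 \<le> n\<close> by (auto intro!: real_sqrt_ge_zero divide_nonneg_nonneg)
  from empirical_frequencies_L1_deviation[OF \<open>prob_space \<mu>\<close> g finite_imageI[OF finite_dyadic_box] this]
  obtain E where "E \<in> sets (PiM {..<n} (\<lambda>_. \<mu>))"
    and "\<forall>x\<in>E. (\<Sum>a\<in>?A. \<bar>measure \<mu> (?g -` {a} \<inter> space \<mu>) - card {i \<in> {..<n}. ?g (x i) = a} / n\<bar>) \<le> t"
    and "measure (PiM {..<n} (\<lambda>_. \<mu>)) (space (PiM {..<n} (\<lambda>_. \<mu>)) - E) \<le> 2 ^ card ?A * exp (- (n * t\<^sup>2 / 2))"
    by blast
  moreover have "space \<mu> = UNIV"
    using sets_eq_imp_space_eq[OF sets_\<mu>] by simp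
  ultimately show ?thesis
    using threshold discrepancy_grid_cell_eq[OF \<open>prob_space \<mu>\<close> sets_\<mu> finite_dyadic_box full]
    by (intro bexI[of _ E]) auto
qed

lemma grid_cell_in_dyadic_box:
  assumes "bounded X" and "diameter X \<le> 1" and "x0 \<in> X" and "y \<in> X"
  shows "grid_cell J x0 y \<in> dyadic_box J"
proof -
  have "\<lfloor>2 ^ J * (y$j - x0$j)\<rfloor> \<in> {-(2 ^ J)..2 ^ J}" for j
  proof -
    have "\<bar>y$j - x0$j\<bar> = dist (y$j) (x0$j)"
      by (simp add: dist_real_def)
    also have "\<dots> \<le> dist y x0"
      by (rule dist_vec_nth_le)
    also have "\<dots> \<le> 1"
      using diameter_bounded_bound[OF assms(1,4,3)] assms(2) by simp
    finally have "-1 \<le> y$j - x0$j" "y$j - x0$j \<le> 1"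
      by auto
    then have "2 ^ J * (-1) \<le> 2 ^ J * (y$j - x0$j)" "2 ^ J * (y$j - x0$j) \<le> 2 ^ J * (1::real)"
      by (intro mult_left_mono; simp)+
    then have "of_int (- (2 ^ J)) \<le> 2 ^ J * (y$j - x0$j)" "2 ^ J * (y$j - x0$j) \<le> of_int (2 ^ J)"
      by simp_all
    then show ?thesis
      by (auto simp only: le_floor_iff atLeastAtMost_iff dest: floor_mono[where y = "of_int (2 ^ J)"])
  qed
  then show ?thesis
    by (simp add: grid_cell_def dyadic_box_def)
qed

lemma measure_grid_cell_dyadic_box:
  fixes \<mu> :: "(real^2) measure"
  assumes "prob_space \<mu>" and "sets \<mu> = sets borel" and "bounded X" and "diameter X \<le> 1"
    and "emeasure \<mu> X = 1" and "x0 \<in> X"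
  shows "measure \<mu> (grid_cell J x0 -` dyadic_box J) = 1"
proof -
  interpret prob_space \<mu> by fact
  have "X \<subseteq> grid_cell J x0 -` dyadic_box J"
    using grid_cell_in_dyadic_box[OF assms(3,4,6)] by blast
  moreover have "grid_cell J x0 -` dyadic_box J \<in> events"
    using measurable_sets[OF measurable_grid_cell] assms(2) by simp
  ultimately have "emeasure \<mu> X \<le> emeasure \<mu> (grid_cell J x0 -` dyadic_box J)"
    by (rule emeasure_mono)
  then have "1 \<le> measure \<mu> (grid_cell J x0 -` dyadic_box J)"
    using \<open>emeasure \<mu> X = 1\<close> by (simp add: emeasure_eq_measure)
  then show ?thesis
    using prob_le_1 by (intro antisym) auto
qed

text \<open>The failure probability \<open>1 / n\<close> comes from a union bound over the \<open>L + 1 \<le> n\<close> levels, each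
  failing with probability at most \<open>1 / n\<^sup>2\<close>.\<close>

lemma RPW_empirical_le_with_high_probability:
  fixes \<mu> :: "(real^2) measure" and X :: "(real^2) set" and n :: nat
  assumes "prob_space \<mu>" and sets_\<mu>: "sets \<mu> = sets borel"
    and "bounded X" and "diameter X \<le> 1" and "emeasure \<mu> X = 1" and "3 \<le> n"
  shows "\<exists>E \<in> sets (PiM {..<n} (\<lambda>_. \<mu>)).
    E \<subseteq> {x \<in> space (PiM {..<n} (\<lambda>_. \<mu>)). RPW 2 1 \<mu> (empirical n x) \<le> 32 * real n powr (-1/3) * ln n} \<and>
    1 - real n powr (-1) \<le> measure (PiM {..<n} (\<lambda>_. \<mu>)) E"
proof -
  let ?M = "PiM {..<n} (\<lambda>_. \<mu>)"
  interpret M: prob_space ?M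
    using \<open>prob_space \<mu>\<close> by (intro prob_space_PiM) auto
  define L where "L = nat \<lfloor>log 64 (real n)\<rfloor>"
  have L: "(2::real) ^ (6 * L) \<le> n" "real n < 64 * 2 ^ (6 * L)"
    using nat_floor_log_bounds[of "real n"] \<open>3 \<le> n\<close> unfolding L_def by auto
  obtain x0 where "x0 \<in> X"
    using \<open>emeasure \<mu> X = 1\<close> by fastforce
  note full = measure_grid_cell_dyadic_box[OF assms(1-5) this, of "2 * L"]
  have "\<forall>k\<in>{..L}. \<exists>E\<in>sets ?M. (\<forall>x\<in>E. hierarchical_matching.discrepancy (dyadic_box (2 * L)) n
      (grid_cell (2 * L) x0 \<circ> x) (\<lambda>c. measure \<mu> (grid_cell (2 * L) x0 -` {c})) (\<lambda>_. 1 / real n) k \<le>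
      7 * (2 ^ (2 * L) / 2 ^ k) * sqrt (ln n / n)) \<and> measure ?M (space ?M - E) \<le> 1 / (real n)\<^sup>2"
    using level_discrepancy_event[OF \<open>prob_space \<mu>\<close> sets_\<mu> full \<open>3 \<le> n\<close>] by simp
  then obtain E where E: "\<And>k. k \<in> {..L} \<Longrightarrow> E k \<in> sets ?M \<and>
      (\<forall>x\<in>E k. hierarchical_matching.discrepancy (dyadic_box (2 * L)) n (grid_cell (2 * L) x0 \<circ> x)
        (\<lambda>c. measure \<mu> (grid_cell (2 * L) x0 -` {c})) (\<lambda>_. 1 / real n) k \<le> 7 * (2 ^ (2 * L) / 2 ^ k) * sqrt (ln n / n)) \<and>
      measure ?M (space ?M - E k) \<le> 1 / (real n)\<^sup>2"
    by metis
  have "measure ?M (space ?M - (\<Inter>k\<le>L. E k)) \<le> card {..L} * (1 / (real n)\<^sup>2)"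
    using E by (intro measure_compl_INT_le) auto
  also have "\<dots> = real (Suc L) / (real n)\<^sup>2"
    by simp
  also have "\<dots> \<le> real n / (real n)\<^sup>2"
  proof -
    have "real (Suc L) \<le> 2 ^ L"
      by (induction L) auto
    also have "(2::real) ^ L \<le> 2 ^ (6 * L)"
      by (intro power_increasing) auto
    finally have "real (Suc L) \<le> n"
      using L(1) by linarith
    then show ?thesis
      by (intro divide_right_mono) simp_all
  qed
  also have "\<dots> = real n powr (-1)"
    using \<open>3 \<le> n\<close> by (simp add: powr_minus power2_eq_square inverse_eq_divide)
  finally have "measure ?M (space ?M - (\<Inter>k\<le>L. E k)) \<le> real n powr (-1)" .
  moreover have E_sets: "(\<Inter>k\<le>L. E k) \<in> sets ?M"
    using E by auto
  ultimately have "1 - real n powr (-1) \<le> measure ?M (\<Inter>k\<le>L. E k)"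
    using M.prob_compl[OF E_sets] by linarith
  moreover have "RPW 2 1 \<mu> (empirical n x) \<le> 32 * real n powr (-1/3) * ln n" if "x \<in> (\<Inter>k\<le>L. E k)" for x
    using that E by (intro RPW_le_of_level_discrepancies[OF \<open>prob_space \<mu>\<close> sets_\<mu> full \<open>3 \<le> n\<close> L]) auto
  ultimately show ?thesis
    using E_sets sets.sets_into_space by (intro bexI[of _ "\<Inter>k\<le>L. E k"]) auto
qed

theorem lemma3p4:
  fixes \<mu> :: "(real^2) measure" and X :: "(real^2) set"
  assumes "prob_space \<mu>" and "sets \<mu> = sets borel"
    and "absolutely_continuous lborel \<mu>"
    and "compact X" and "diameter X \<le> 1" and "emeasure \<mu> X = 1"
  shows "\<exists>C a c N. C > 0 \<and> a \<ge> 0 \<and> c > 0 \<and>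
    (\<forall>n \<ge> N. \<exists>E \<in> sets (PiM {..<n} (\<lambda>_. \<mu>)).
        E \<subseteq> {x \<in> space (PiM {..<n} (\<lambda>_. \<mu>)).
                 RPW 2 1 \<mu> (empirical n x) \<le> C * real n powr (-1/3) * (ln (real n)) powr a} \<and>
        measure (PiM {..<n} (\<lambda>_. \<mu>)) E \<ge> 1 - real n powr (-c))"
proof -
  show ?thesis
    using RPW_empirical_le_with_high_probability[OF assms(1,2) compact_imp_bounded[OF assms(4)] assms(5,6)]
    by (intro exI[of _ "32::real"] exI[of _ "1::real"] exI[of _ "1::real"] exI[of _ "3::nat"]) simp
qed

end
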